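(* Let $n\ge3$, $k\ge1$, $i\in\{1,2,3\}$, and set $\lambda_{n,k}:=k(k+n-2)$, $\sigma_{n,k,1}:=-k$, $\sigma_{n,k,2}:=1$, $\sigma_{n,k,3}:=k+n-2$. For every $w\in H_{n,k,i}$: $$Q_{V_n}(w)=c_{n,k,i}\mathrm{Av}(|\nabla_T w|^2),\quad c_{n,k,i}:=\frac{n\sigma_{n,k,i}}{2\lambda_{n,k}};$$ $$\mathrm{Av}\big((\mathrm{div}_{\mathbb S^{n-1}}w)^2\big)=\alpha_{n,k,i}\mathrm{Av}(|\nabla_T w|^2),\quad \alpha_{n,k,i}:=\frac{\sigma_{n,k,i}^2(2\lambda_{n,k}c_{n,k,i}-n)}{n\lambda_{n,k}(2\sigma_{n,k,i}-n)};$$ $$Q_n(w)=C_{n,k,i}\mathrm{Av}(|\nabla_T w|^2),\quad C_{n,k,i}:=\frac{n}{2(n-1)}+\frac{n(n-3)}{2(n-1)^2}\alpha_{n,k,i}-c_{n,k,i}.$$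
   Context: $\mathbb S^{n-1}\subset\mathbb R^n$ unit sphere, $B_1$ unit ball; $\mathrm{Av}(f):=\frac{1}{\mathcal H^{n-1}(\mathbb S^{n-1})}\int_{\mathbb S^{n-1}}f\,d\mathcal H^{n-1}$. $\{\tau_i\}$ local orthonormal tangent frame; $\nabla_T w$ tangential gradient ($n\times(n-1)$ matrix with entries $\partial_{\tau_j}w^i$), $\nabla_T w^j$ tangential gradient vector of the $j$-th component, $\mathrm{div}_{\mathbb S^{n-1}}w:=\sum_i\langle\partial_{\tau_i}w,\tau_i\rangle$, $|\cdot|$ Frobenius norm; $w_h$ componentwise harmonic extension. $H_n:=\{w\in W^{1,2}(\mathbb S^{n-1};\mathbb R^n):\mathrm{Av}(w)=0,\mathrm{Av}(\langle w,x\rangle)=0\}$; $A(w):=(\mathrm{div}_{\mathbb S^{n-1}}w)x-\sum_{j=1}^nx_j\nabla_T w^j$; $Q_{V_n}(w):=\frac n2\mathrm{Av}(\langle w,A(w)\rangle)$; $Q_n(w):=\frac{n}{2(n-1)}\mathrm{Av}\big(|\nabla_T w|^2+\frac{n-3}{n-1}(\mathrm{div}_{\mathbb S^{n-1}}w)^2\big)-Q_{V_n}(w)$. For $k\ge1$: $H_{n,k}$ is the subspace of $H_n$ of maps whose components are $k$-th order spherical harmonics; $H_{n,k,\mathrm{sol}}:=\{w\in H_{n,k}:\mathrm{div}\,w_h\equiv0\text{ in }B_1\}$; $H_{n,k,1}:=\{w\in H_{n,k,\mathrm{sol}}:A(w)=-kw\}$, $H_{n,k,2}:=\{w\in H_{n,k,\mathrm{sol}}:A(w)=w\}$,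 and $H_{n,k,3}$ is the $W^{1,2}$-orthogonal complement of $H_{n,k,\mathrm{sol}}$ in $H_{n,k}$. *)

theory Defs
  imports "HOL-Analysis.Analysis"
begin

text \<open>Points of R^n are vectors of type real^'n, n = CARD('n).\<close>

definition hom_poly :: "nat \<Rightarrow> (real^'n \<Rightarrow> real) \<Rightarrow> bool" where
  "hom_poly k f \<longleftrightarrow> (\<exists>c :: ('n \<Rightarrow> nat) \<Rightarrow> real.
      finite {a. c a \<noteq> 0} \<and> (\<forall>a. c a \<noteq> 0 \<longrightarrow> sum a UNIV = k) \<and>
      (\<forall>x. f x = (\<Sum>a\<in>{a. c a \<noteq> 0}. c a * (\<Prod>i\<in>UNIV. (x $ i) ^ a i))))"

definition pd :: "'n \<Rightarrow> (real^'n \<Rightarrow> real) \<Rightarrow> real^'n \<Rightarrow> real" where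
  "pd i f x = deriv (\<lambda>t. f (x + t *\<^sub>R axis i 1)) 0"

definition laplacian :: "(real^'n \<Rightarrow> real) \<Rightarrow> real^'n \<Rightarrow> real" where
  "laplacian f x = (\<Sum>i\<in>UNIV. pd i (pd i f) x)"

text \<open>k-th order spherical harmonics, represented by the homogeneous harmonic polynomial
  of degree k (which is also their harmonic extension).\<close>
definition sph_harm :: "nat \<Rightarrow> (real^'n \<Rightarrow> real) \<Rightarrow> bool" where
  "sph_harm k f \<longleftrightarrow> hom_poly k f \<and> (\<forall>x. laplacian f x = 0)"

definition grad :: "(real^'n \<Rightarrow> real) \<Rightarrow> real^'n \<Rightarrow> real^'n" where
  "grad f x = (\<chi> i. pd i f x)"

text \<open>Tangential gradient at a point x of the unit sphere.\<close>
definition gradT :: "(real^'n \<Rightarrow> real) \<Rightarrow> real^'n \<Rightarrow> real^'n" where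
  "gradT f x = grad f x - (grad f x \<bullet> x) *\<^sub>R x"

definition comp :: "(real^'n \<Rightarrow> real^'n) \<Rightarrow> 'n \<Rightarrow> real^'n \<Rightarrow> real" where
  "comp w j = (\<lambda>y. w y $ j)"

definition gradT_sq :: "(real^'n \<Rightarrow> real^'n) \<Rightarrow> real^'n \<Rightarrow> real" where
  "gradT_sq w x = (\<Sum>j\<in>UNIV. (norm (gradT (comp w j) x))\<^sup>2)"

text \<open>Spherical divergence: sum_i <d_{tau_i} w, tau_i> = sum_j (grad_T w^j)_j (frame independent).\<close>
definition divS :: "(real^'n \<Rightarrow> real^'n) \<Rightarrow> real^'n \<Rightarrow> real" where
  "divS w x = (\<Sum>j\<in>UNIV. gradT (comp w j) x $ j)"

text \<open>Euclidean divergence (of the harmonic extension).\<close>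
definition divE :: "(real^'n \<Rightarrow> real^'n) \<Rightarrow> real^'n \<Rightarrow> real" where
  "divE w x = (\<Sum>j\<in>UNIV. pd j (comp w j) x)"

definition Aop :: "(real^'n \<Rightarrow> real^'n) \<Rightarrow> real^'n \<Rightarrow> real^'n" where
  "Aop w x = divS w x *\<^sub>R x - (\<Sum>j\<in>UNIV. (x $ j) *\<^sub>R gradT (comp w j) x)"

text \<open>Average over the unit sphere w.r.t. normalized surface measure, expressed through the
  cone measure: Av f = (1/|B_1|) int_{B_1} f(x/|x|) dx.\<close>
definition Av :: "(real^'n \<Rightarrow> 'b::euclidean_space) \<Rightarrow> 'b" where
  "Av f = integral (ball 0 1) (\<lambda>x. f (x /\<^sub>R norm x)) /\<^sub>R measure lborel (ball (0::real^'n) 1)"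

definition Hn :: "(real^'n \<Rightarrow> real^'n) \<Rightarrow> bool" where
  "Hn w \<longleftrightarrow> Av w = 0 \<and> Av (\<lambda>x. w x \<bullet> x) = 0"

definition Hnk :: "nat \<Rightarrow> (real^'n \<Rightarrow> real^'n) \<Rightarrow> bool" where
  "Hnk k w \<longleftrightarrow> Hn w \<and> (\<forall>j. sph_harm k (comp w j))"

definition Hsol :: "nat \<Rightarrow> (real^'n \<Rightarrow> real^'n) \<Rightarrow> bool" where
  "Hsol k w \<longleftrightarrow> Hnk k w \<and> (\<forall>x\<in>ball 0 1. divE w x = 0)"

definition H1 :: "nat \<Rightarrow> (real^'n \<Rightarrow> real^'n) \<Rightarrow> bool" where
  "H1 k w \<longleftrightarrow> Hsol k w \<and> (\<forall>x\<in>sphere 0 1. Aop w x = - real k *\<^sub>R w x)"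

definition H2 :: "nat \<Rightarrow> (real^'n \<Rightarrow> real^'n) \<Rightarrow> bool" where
  "H2 k w \<longleftrightarrow> Hsol k w \<and> (\<forall>x\<in>sphere 0 1. Aop w x = w x)"

text \<open>W^{1,2}(S^{n-1}) inner product (normalized; normalization irrelevant for orthogonality).\<close>
definition W12_inner :: "(real^'n \<Rightarrow> real^'n) \<Rightarrow> (real^'n \<Rightarrow> real^'n) \<Rightarrow> real" where
  "W12_inner w v = Av (\<lambda>x. w x \<bullet> v x + (\<Sum>j\<in>UNIV. gradT (comp w j) x \<bullet> gradT (comp v j) x))"

definition H3 :: "nat \<Rightarrow> (real^'n \<Rightarrow> real^'n) \<Rightarrow> bool" where
  "H3 k w \<longleftrightarrow> Hnk k w \<and> (\<forall>v. Hsol k v \<longrightarrow> W12_inner w v = 0)"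

definition Hki :: "nat \<Rightarrow> nat \<Rightarrow> (real^'n \<Rightarrow> real^'n) \<Rightarrow> bool" where
  "Hki k i w \<longleftrightarrow> (if i = 1 then H1 k w else if i = 2 then H2 k w else H3 k w)"

definition QV :: "(real^'n \<Rightarrow> real^'n) \<Rightarrow> real" where
  "QV w = real CARD('n) / 2 * Av (\<lambda>x. w x \<bullet> Aop w x)"

definition Qn :: "(real^'n \<Rightarrow> real^'n) \<Rightarrow> real" where
  "Qn w = (let n = real CARD('n) in
     n / (2 * (n - 1)) * Av (\<lambda>x. gradT_sq w x + (n - 3) / (n - 1) * (divS w x)\<^sup>2) - QV w)"

definition lam :: "real \<Rightarrow> nat \<Rightarrow> real" where
  "lam n k = real k * (real k + n - 2)"

definition sig :: "real \<Rightarrow> nat \<Rightarrow> nat \<Rightarrow> real" where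
  "sig n k i = (if i = 1 then - real k else if i = 2 then 1 else real k + n - 2)"

definition cc :: "real \<Rightarrow> nat \<Rightarrow> nat \<Rightarrow> real" where
  "cc n k i = n * sig n k i / (2 * lam n k)"

definition alph :: "real \<Rightarrow> nat \<Rightarrow> nat \<Rightarrow> real" where
  "alph n k i = (sig n k i)\<^sup>2 * (2 * lam n k * cc n k i - n) / (n * lam n k * (2 * sig n k i - n))"

definition CC :: "real \<Rightarrow> nat \<Rightarrow> nat \<Rightarrow> real" where
  "CC n k i = n / (2 * (n - 1)) + n * (n - 3) / (2 * (n - 1)\<^sup>2) * alph n k i - cc n k i"

end

theory Submission
  imports Defs
begin

text \<open>All quantities are averages of polynomials over the sphere, and the only analytic input is
  the divergence identity \<open>Av (\<partial>\<^sub>i G) = (n + d - 1) Av (x\<^sub>i G)\<close> for a homogeneous polynomial \<open>G\<close> of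
  degree \<open>d\<close>. It yields Green's identity for spherical harmonics, hence
  \<open>Av |\<nabla>\<^sub>T w|\<^sup>2 = k (k + n - 2) Av |w|\<^sup>2\<close>, and expresses \<open>Av \<langle>w, A w\<rangle>\<close> through \<open>Av |w|\<^sup>2\<close>,
  \<open>Av (div w\<^sub>h \<langle>w, x\<rangle>)\<close> and \<open>Av \<langle>w, x\<rangle>\<^sup>2\<close>. On \<open>H\<^sub>n\<^sub>,\<^sub>k\<^sub>,\<^sub>1\<close> and \<open>H\<^sub>n\<^sub>,\<^sub>k\<^sub>,\<^sub>2\<close> the eigenvalue
  equation for \<open>A\<close> closes these relations. A field of \<open>H\<^sub>n\<^sub>,\<^sub>k\<^sub>,\<^sub>3\<close> differs from the field
  \<open>|x|\<^sup>2 \<nabla>q - (n + 2k - 4) q x\<close>, built from \<open>q = div w\<^sub>h / \<beta>\<close>, by a solenoidal field that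
  \<open>W\<^sup>1\<^sup>,\<^sup>2\<close>-orthogonality forces to vanish in mean square, so all its averages are multiples of
  \<open>Av q\<^sup>2\<close>.\<close>

section \<open>Homogeneous polynomials\<close>

definition monom_eval :: "('n \<Rightarrow> nat) \<Rightarrow> real^'n \<Rightarrow> real" where
  "monom_eval a x = (\<Prod>i\<in>UNIV. x$i ^ a i)"

text \<open>Lists of (exponent, coefficient) pairs represent polynomials in a form on which sums,
  products and partial derivatives are computed termwise.\<close>

definition poly_terms :: "(('n \<Rightarrow> nat) \<times> real) list \<Rightarrow> real^'n \<Rightarrow> real" where
  "poly_terms ts x = (\<Sum>t\<leftarrow>ts. snd t * monom_eval (fst t) x)"

definition hom_terms :: "nat \<Rightarrow> (('n::finite \<Rightarrow> nat) \<times> real) list \<Rightarrow> bool" where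
  "hom_terms k ts \<longleftrightarrow> (\<forall>t\<in>set ts. sum (fst t) UNIV = k)"

definition pd_terms :: "'n \<Rightarrow> (('n \<Rightarrow> nat) \<times> real) list \<Rightarrow> (('n \<Rightarrow> nat) \<times> real) list" where
  "pd_terms i ts =
     map (\<lambda>t. ((fst t)(i := fst t i - 1), snd t * real (fst t i))) (filter (\<lambda>t. 0 < fst t i) ts)"

definition mult_terms ::
  "(('n \<Rightarrow> nat) \<times> real) list \<Rightarrow> (('n \<Rightarrow> nat) \<times> real) list \<Rightarrow> (('n \<Rightarrow> nat) \<times> real) list" where
  "mult_terms ts us = concat (map (\<lambda>t. map (\<lambda>u. (\<lambda>j. fst t j + fst u j, snd t * snd u)) us) ts)"

lemma poly_terms_Nil [simp]: "poly_terms [] = (\<lambda>x. 0)"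
  by (simp add: poly_terms_def fun_eq_iff)

lemma poly_terms_Cons [simp]: "poly_terms (t # ts) x = snd t * monom_eval (fst t) x + poly_terms ts x"
  by (simp add: poly_terms_def)

lemma poly_terms_append [simp]: "poly_terms (ts @ us) x = poly_terms ts x + poly_terms us x"
  by (simp add: poly_terms_def)

lemma poly_terms_scale: "poly_terms (map (\<lambda>t. (fst t, c * snd t)) ts) x = c * poly_terms ts x"
  by (induction ts) (auto simp: algebra_simps)

lemma monom_eval_add: "monom_eval (\<lambda>j. a j + b j) x = monom_eval a x * monom_eval b x"
  by (simp add: monom_eval_def power_add prod.distrib)

lemma poly_terms_mult: "poly_terms (mult_terms ts us) x = poly_terms ts x * poly_terms us x"
proof (induction ts)
  case (Cons t ts)
  have "poly_terms (map (\<lambda>u. (\<lambda>j. fst t j + fst u j, snd t * snd u)) us) x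
      = snd t * monom_eval (fst t) x * poly_terms us x"
    by (induction us) (auto simp: monom_eval_add algebra_simps)
  with Cons show ?case by (simp add: mult_terms_def algebra_simps)
qed (simp add: mult_terms_def)

lemma monom_eval_split: "monom_eval a y = y$i ^ a i * (\<Prod>j\<in>UNIV-{i}. y$j ^ a j)"
  unfolding monom_eval_def by (simp add: prod.remove)

lemma monom_eval_has_derivative_axis:
  "((\<lambda>t. monom_eval a (x + t *\<^sub>R axis i 1)) has_real_derivative
     (if 0 < a i then real (a i) * monom_eval (a(i := a i - 1)) (x + t *\<^sub>R axis i 1) else 0)) (at t)"
proof -
  define R where "R = (\<Prod>j\<in>UNIV-{i}. x$j ^ a j)"
  have other: "(\<Prod>j\<in>UNIV-{i}. (x + s *\<^sub>R axis i 1)$j ^ b j) = (\<Prod>j\<in>UNIV-{i}. x$j ^ b j)"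
    for s and b :: "'a \<Rightarrow> nat"
    by (rule prod.cong) (auto simp: axis_def)
  have R_lower: "(\<Prod>j\<in>UNIV-{i}. x$j ^ (a(i := a i - 1)) j) = R"
    unfolding R_def by (rule prod.cong) auto
  have eq: "monom_eval a (x + s *\<^sub>R axis i 1) = (x$i + s) ^ a i * R" for s
    unfolding R_def using monom_eval_split[of a _ i] other[of s a] by (simp add: axis_def)
  have eq_lower: "monom_eval (a(i := a i - 1)) (x + s *\<^sub>R axis i 1) = (x$i + s) ^ (a i - 1) * R" for s
    using monom_eval_split[of "a(i := a i - 1)" _ i] other[of s "a(i := a i - 1)"] R_lower
    by (simp add: axis_def)
  have "((\<lambda>t. (x$i + t) ^ a i * R) has_real_derivative (real (a i) * (x$i + t) ^ (a i - 1) * R)) (at t)"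
    by (auto intro!: derivative_eq_intros)
  then show ?thesis
    unfolding eq eq_lower by (cases "0 < a i") (auto simp: mult.assoc)
qed

lemma poly_terms_has_derivative_axis:
  "((\<lambda>t. poly_terms ts (x + t *\<^sub>R axis i 1)) has_real_derivative
     poly_terms (pd_terms i ts) (x + t *\<^sub>R axis i 1)) (at t)"
proof (induction ts)
  case (Cons u ts)
  have "((\<lambda>t. snd u * monom_eval (fst u) (x + t *\<^sub>R axis i 1) + poly_terms ts (x + t *\<^sub>R axis i 1))
      has_real_derivative snd u * (if 0 < fst u i
          then real (fst u i) * monom_eval ((fst u)(i := fst u i - 1)) (x + t *\<^sub>R axis i 1) else 0)
        + poly_terms (pd_terms i ts) (x + t *\<^sub>R axis i 1)) (at t)"
    by (rule DERIV_add[OF DERIV_cmult[OF monom_eval_has_derivative_axis] Cons.IH])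
  then show ?case by (cases "0 < fst u i") (simp_all add: pd_terms_def algebra_simps)
qed (simp add: pd_terms_def)

lemma pd_poly_terms: "pd i (poly_terms ts) = poly_terms (pd_terms i ts)"
  using poly_terms_has_derivative_axis[of ts _ i 0] by (simp add: pd_def DERIV_imp_deriv fun_eq_iff)

lemma pd_terms_Nil [simp]: "pd_terms i [] = []"
  by (simp add: pd_terms_def)

lemma pd_terms_single [simp]:
  "pd_terms i [t] = (if 0 < fst t i then [((fst t)(i := fst t i - 1), snd t * real (fst t i))] else [])"
  by (simp add: pd_terms_def)

lemma pd_terms_append [simp]: "pd_terms i (ts @ us) = pd_terms i ts @ pd_terms i us"
  by (simp add: pd_terms_def)

lemma pd_terms_Cons: "pd_terms i (t # ts) = pd_terms i [t] @ pd_terms i ts"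
  by (simp add: pd_terms_def)

lemma hom_terms_pd_terms:
  assumes "hom_terms k ts"
  shows "hom_terms (k - 1) (pd_terms i ts)"
  unfolding hom_terms_def pd_terms_def
proof (intro ballI)
  fix u assume "u \<in> set (map (\<lambda>t. ((fst t)(i := fst t i - 1), snd t * real (fst t i)))
                        (filter (\<lambda>t. 0 < fst t i) ts))"
  then obtain a c where t: "(a, c) \<in> set ts" "0 < a i" "u = (a(i := a i - 1), c * real (a i))"
    by auto
  have "k = a i + sum a (UNIV - {i})"
    using assms t(1) sum.remove[of UNIV i a] by (auto simp: hom_terms_def)
  moreover have "sum (a(i := a i - 1)) UNIV = (a i - 1) + sum a (UNIV - {i})"
    using sum.remove[of UNIV i "a(i := a i - 1)"] sum.cong[of "UNIV - {i}" _ "a(i := a i - 1)" a] by simp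
  ultimately show "sum (fst u) UNIV = k - 1"
    using t(2,3) by simp
qed

lemma euler_poly_terms:
  assumes "hom_terms k ts"
  shows "(\<Sum>i\<in>UNIV. x$i * poly_terms (pd_terms i ts) x) = real k * poly_terms ts x"
  using assms
proof (induction ts)
  case (Cons t ts)
  obtain a c where t: "t = (a, c)" by (cases t)
  have single: "x$i * poly_terms (pd_terms i [t]) x = c * monom_eval a x * real (a i)" for i
  proof (cases "0 < a i")
    case True
    have "x$i * monom_eval (a(i := a i - 1)) x = monom_eval a x"
      using True monom_eval_split[of "a(i := a i - 1)" x i] monom_eval_split[of a x i]
      by (simp add: power_Suc[symmetric] del: power_Suc)
    then show ?thesis using True by (simp add: t algebra_simps)
  qed (simp add: t)
  have "sum a UNIV = k" using Cons.prems by (simp add: hom_terms_def t)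
  then have k: "(\<Sum>i\<in>UNIV. real (a i)) = real k" by (metis of_nat_sum)
  have "(\<Sum>i\<in>UNIV. x$i * poly_terms (pd_terms i [t]) x) = (\<Sum>i\<in>UNIV. c * monom_eval a x * real (a i))"
    by (simp only: single)
  also have "\<dots> = real k * (c * monom_eval a x)"
    by (simp add: sum_distrib_left[symmetric] k)
  finally show ?case
    using Cons by (subst pd_terms_Cons) (simp add: sum.distrib algebra_simps hom_terms_def t)
qed simp

lemma pd_terms_commute:
  "poly_terms (pd_terms i (pd_terms j ts)) x = poly_terms (pd_terms j (pd_terms i ts)) x"
proof (induction ts)
  case (Cons t ts)
  obtain a c where t: "t = (a, c)" by (cases t)
  have swap: "(a(j := a j - Suc 0))(i := a i - Suc 0) = (a(i := a i - Suc 0))(j := a j - Suc 0)"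
    if "i \<noteq> j" using that by (auto simp: fun_eq_iff)
  have "poly_terms (pd_terms i (pd_terms j [t])) x = poly_terms (pd_terms j (pd_terms i [t])) x"
    by (cases "i = j") (auto simp: t swap)
  with Cons show ?case
    by (subst (1 2) pd_terms_Cons) simp
qed simp

definition terms_coeff :: "(('n \<Rightarrow> nat) \<times> real) list \<Rightarrow> ('n \<Rightarrow> nat) \<Rightarrow> real" where
  "terms_coeff ts a = sum_list (map snd (filter (\<lambda>t. fst t = a) ts))"

lemma poly_terms_eq_sum_coeff:
  assumes "finite A" "fst ` set ts \<subseteq> A"
  shows "poly_terms ts x = (\<Sum>a\<in>A. terms_coeff ts a * monom_eval a x)"
  using assms(2)
proof (induction ts)
  case (Cons t ts)
  have "terms_coeff (t # ts) a = (if fst t = a then snd t else 0) + terms_coeff ts a" for a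
    by (simp add: terms_coeff_def)
  then have "(\<Sum>a\<in>A. terms_coeff (t # ts) a * monom_eval a x)
      = (\<Sum>a\<in>A. if fst t = a then snd t * monom_eval a x else 0) + (\<Sum>a\<in>A. terms_coeff ts a * monom_eval a x)"
    by (simp add: distrib_right sum.distrib if_distrib[of "\<lambda>r. r * monom_eval _ x"] cong: if_cong)
  also have "(\<Sum>a\<in>A. if fst t = a then snd t * monom_eval a x else 0) = snd t * monom_eval (fst t) x"
    using Cons.prems assms(1) by (simp add: sum.delta)
  finally show ?case using Cons by simp
qed (simp add: terms_coeff_def)

lemma hom_poly_poly_terms:
  assumes "hom_terms k ts"
  shows "hom_poly k (poly_terms ts)"
proof -
  define c where "c = terms_coeff ts"
  have sub: "{a. c a \<noteq> 0} \<subseteq> fst ` set ts"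
  proof
    fix a assume "a \<in> {a. c a \<noteq> 0}"
    then have "filter (\<lambda>t. fst t = a) ts \<noteq> []" by (auto simp: c_def terms_coeff_def)
    then show "a \<in> fst ` set ts" by (auto simp: filter_empty_conv)
  qed
  have "poly_terms ts x = (\<Sum>a\<in>{a. c a \<noteq> 0}. c a * monom_eval a x)" for x
  proof -
    have "poly_terms ts x = (\<Sum>a\<in>fst ` set ts. c a * monom_eval a x)"
      using poly_terms_eq_sum_coeff[of "fst ` set ts" ts x] by (simp add: c_def)
    also have "\<dots> = (\<Sum>a\<in>{a. c a \<noteq> 0}. c a * monom_eval a x)"
      by (rule sum.mono_neutral_right) (use sub in auto)
    finally show ?thesis .
  qed
  moreover have "finite {a. c a \<noteq> 0}" using sub finite_surj by blast
  moreover have "\<forall>a. c a \<noteq> 0 \<longrightarrow> sum a UNIV = k" using sub assms by (auto simp: hom_terms_def)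
  ultimately show ?thesis unfolding hom_poly_def monom_eval_def by blast
qed

lemma hom_poly_iff_terms: "hom_poly k f \<longleftrightarrow> (\<exists>ts. hom_terms k ts \<and> f = poly_terms ts)"
proof
  assume "hom_poly k f"
  then obtain c :: "('a \<Rightarrow> nat) \<Rightarrow> real" where c: "finite {a. c a \<noteq> 0}"
      "\<forall>a. c a \<noteq> 0 \<longrightarrow> sum a UNIV = k" "\<forall>x. f x = (\<Sum>a\<in>{a. c a \<noteq> 0}. c a * monom_eval a x)"
    unfolding hom_poly_def monom_eval_def by blast
  obtain as where as: "set as = {a. c a \<noteq> 0}" "distinct as"
    using finite_distinct_list[OF c(1)] by blast
  have "hom_terms k (map (\<lambda>a. (a, c a)) as)" using c(2) as by (auto simp: hom_terms_def)
  moreover have "f = poly_terms (map (\<lambda>a. (a, c a)) as)"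
    using c(3) as by (simp add: poly_terms_def o_def sum_list_distinct_conv_sum_set fun_eq_iff)
  ultimately show "\<exists>ts. hom_terms k ts \<and> f = poly_terms ts" by blast
qed (auto intro: hom_poly_poly_terms)

lemma hom_poly_zero [simp]: "hom_poly k (\<lambda>x. 0)"
  unfolding hom_poly_iff_terms by (rule exI[of _ "[]"]) (simp add: hom_terms_def)

lemma hom_poly_add: "hom_poly k f \<Longrightarrow> hom_poly k g \<Longrightarrow> hom_poly k (\<lambda>x. f x + g x)"
  unfolding hom_poly_iff_terms
proof (elim exE conjE)
  fix ts us assume "hom_terms k ts" "f = poly_terms ts" "hom_terms k us" "g = poly_terms us"
  then show "\<exists>vs. hom_terms k vs \<and> (\<lambda>x. f x + g x) = poly_terms vs"
    by (intro exI[of _ "ts @ us"]) (auto simp: hom_terms_def)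
qed

lemma hom_poly_scale: "hom_poly k f \<Longrightarrow> hom_poly k (\<lambda>x. c * f x)"
  unfolding hom_poly_iff_terms
proof (elim exE conjE)
  fix ts assume "hom_terms k ts" "f = poly_terms ts"
  then show "\<exists>vs. hom_terms k vs \<and> (\<lambda>x. c * f x) = poly_terms vs"
    by (intro exI[of _ "map (\<lambda>t. (fst t, c * snd t)) ts"]) (auto simp: hom_terms_def poly_terms_scale)
qed

lemma hom_poly_diff: "hom_poly k f \<Longrightarrow> hom_poly k g \<Longrightarrow> hom_poly k (\<lambda>x. f x - g x)"
  using hom_poly_add[of k f "\<lambda>x. - 1 * g x"] hom_poly_scale[of k g "- 1"] by simp

lemma hom_poly_mult: "hom_poly k f \<Longrightarrow> hom_poly l g \<Longrightarrow> hom_poly (k + l) (\<lambda>x. f x * g x)"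
  unfolding hom_poly_iff_terms
proof (elim exE conjE)
  fix ts us assume "hom_terms k ts" "f = poly_terms ts" "hom_terms l us" "g = poly_terms us"
  moreover have "hom_terms (k + l) (mult_terms ts us)"
    using \<open>hom_terms k ts\<close> \<open>hom_terms l us\<close>
    by (auto simp: hom_terms_def mult_terms_def sum.distrib)
  ultimately show "\<exists>vs. hom_terms (k + l) vs \<and> (\<lambda>x. f x * g x) = poly_terms vs"
    by (auto simp: poly_terms_mult fun_eq_iff)
qed

lemma hom_poly_sum:
  "finite S \<Longrightarrow> (\<And>j. j \<in> S \<Longrightarrow> hom_poly k (f j)) \<Longrightarrow> hom_poly k (\<lambda>x. \<Sum>j\<in>S. f j x)"
  by (induction S rule: finite_induct) (auto intro: hom_poly_add)

lemma hom_poly_coord: "hom_poly 1 (\<lambda>x. x$i)"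
proof -
  have "monom_eval (\<lambda>j. if j = i then 1 else 0) x = x$i" for x :: "real^'a"
    unfolding monom_eval_def by (simp add: if_distrib[of "\<lambda>e. x$_ ^ e"] prod.delta cong: if_cong)
  then show ?thesis
    unfolding hom_poly_iff_terms
    by (intro exI[of _ "[(\<lambda>j. if j = i then 1 else 0, 1)]"]) (simp add: hom_terms_def fun_eq_iff)
qed

lemma hom_poly_inner_self: "hom_poly 2 (\<lambda>x::real^'n. x \<bullet> x)"
proof -
  have "hom_poly (1 + 1) (\<lambda>x::real^'n. \<Sum>i\<in>UNIV. x$i * x$i)"
    by (intro hom_poly_sum hom_poly_mult hom_poly_coord) auto
  then show ?thesis by (simp add: inner_vec_def numeral_2_eq_2)
qed

lemma hom_poly_pd: "hom_poly k f \<Longrightarrow> hom_poly (k - 1) (pd i f)"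
  unfolding hom_poly_iff_terms
proof (elim exE conjE)
  fix ts assume "hom_terms k ts" "f = poly_terms ts"
  then show "\<exists>us. hom_terms (k - 1) us \<and> pd i f = poly_terms us"
    by (intro exI[of _ "pd_terms i ts"] conjI hom_terms_pd_terms) (simp_all add: pd_poly_terms)
qed

lemma hom_poly_has_derivative_axis:
  "hom_poly k f \<Longrightarrow>
   ((\<lambda>t. f (x + t *\<^sub>R axis i 1)) has_real_derivative pd i f (x + t *\<^sub>R axis i 1)) (at t)"
  unfolding hom_poly_iff_terms by (auto simp: pd_poly_terms poly_terms_has_derivative_axis)

lemma hom_poly_explicit:
  assumes "hom_poly k f"
  obtains c :: "('n::finite \<Rightarrow> nat) \<Rightarrow> real" and A where "finite A" "\<And>a. a \<in> A \<Longrightarrow> sum a UNIV = k"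
    "f = (\<lambda>x. \<Sum>a\<in>A. c a * monom_eval a x)"
  using assms unfolding hom_poly_def monom_eval_def by (auto simp: fun_eq_iff)

lemma continuous_on_hom_poly: "hom_poly k f \<Longrightarrow> continuous_on UNIV f"
  by (elim hom_poly_explicit) (simp add: monom_eval_def continuous_intros)

lemma hom_poly_scaleR:
  assumes "hom_poly k f"
  shows "f (r *\<^sub>R x) = r ^ k * f x"
proof -
  obtain c A where "finite A" and A: "\<And>a. a \<in> A \<Longrightarrow> sum a UNIV = k" and f: "f = (\<lambda>x. \<Sum>a\<in>A. c a * monom_eval a x)"
    using hom_poly_explicit[OF assms] by blast
  have "monom_eval a (r *\<^sub>R x) = r ^ sum a UNIV * monom_eval a x" for a
    by (simp add: monom_eval_def power_mult_distrib prod.distrib power_sum)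
  then show ?thesis
    by (simp add: f A sum_distrib_left algebra_simps cong: sum.cong)
qed

lemma hom_poly_0_pd: "hom_poly 0 f \<Longrightarrow> pd i f x = 0"
  unfolding hom_poly_iff_terms
  by (auto simp: pd_poly_terms pd_terms_def hom_terms_def filter_empty_conv)

lemma euler_hom_poly: "hom_poly k f \<Longrightarrow> (\<Sum>i\<in>UNIV. x$i * pd i f x) = real k * f x"
  unfolding hom_poly_iff_terms by (auto simp: pd_poly_terms euler_poly_terms)

lemma pd_commute: "hom_poly k f \<Longrightarrow> pd i (pd j f) = pd j (pd i f)"
  unfolding hom_poly_iff_terms by (auto simp: pd_poly_terms pd_terms_commute)

lemma hom_poly_eq_0_if_vanishes_on_ball:
  assumes f: "hom_poly k f" and "\<And>x. x \<in> ball 0 1 \<Longrightarrow> f x = 0"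
  shows "f x = 0"
proof -
  define r where "r = 1 / (norm x + 1)"
  have r: "r > 0" "norm (r *\<^sub>R x) < 1"
    by (auto simp: r_def field_simps add_pos_nonneg)
  then have "r ^ k * f x = 0" using assms by (simp flip: hom_poly_scaleR[OF f])
  with r show ?thesis by simp
qed

section \<open>Differential calculus of polynomials\<close>

lemma pd_eqI: "((\<lambda>t. f (x + t *\<^sub>R axis i 1)) has_real_derivative D) (at 0) \<Longrightarrow> pd i f x = D"
  unfolding pd_def by (rule DERIV_imp_deriv)

lemma hom_poly_has_derivative_axis_0:
  "hom_poly k f \<Longrightarrow> ((\<lambda>t. f (x + t *\<^sub>R axis i 1)) has_real_derivative pd i f x) (at 0)"
  using hom_poly_has_derivative_axis[of k f x i 0] by simp

lemma pd_add: "hom_poly a f \<Longrightarrow> hom_poly b g \<Longrightarrow> pd i (\<lambda>x. f x + g x) x = pd i f x + pd i g x"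
  by (rule pd_eqI, rule DERIV_add) (auto intro: hom_poly_has_derivative_axis_0)

lemma pd_diff: "hom_poly a f \<Longrightarrow> hom_poly b g \<Longrightarrow> pd i (\<lambda>x. f x - g x) x = pd i f x - pd i g x"
  by (rule pd_eqI, rule DERIV_diff) (auto intro: hom_poly_has_derivative_axis_0)

lemma pd_scale: "hom_poly a f \<Longrightarrow> pd i (\<lambda>x. c * f x) x = c * pd i f x"
  by (rule pd_eqI, rule DERIV_cmult) (auto intro: hom_poly_has_derivative_axis_0)

lemma pd_mult:
  "hom_poly a f \<Longrightarrow> hom_poly b g \<Longrightarrow> pd i (\<lambda>x. f x * g x) x = pd i f x * g x + f x * pd i g x"
  by (rule pd_eqI, rule DERIV_cong[OF DERIV_mult])
    (auto intro: hom_poly_has_derivative_axis_0 simp: algebra_simps)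

lemma pd_sum:
  "finite S \<Longrightarrow> (\<And>j. j \<in> S \<Longrightarrow> hom_poly a (f j)) \<Longrightarrow>
    pd i (\<lambda>x. \<Sum>j\<in>S. f j x) x = (\<Sum>j\<in>S. pd i (f j) x)"
  by (rule pd_eqI, rule DERIV_sum) (auto intro: hom_poly_has_derivative_axis_0)

lemma pd_const: "pd i (\<lambda>x. c) x = 0"
  by (rule pd_eqI) simp

lemma pd_coord: "pd i (\<lambda>x. x$j) x = (if i = j then 1 else 0)"
  by (rule pd_eqI) (auto simp: axis_def intro!: derivative_eq_intros)

lemma pd_inner_self: "pd i (\<lambda>x::real^'n. x \<bullet> x) x = 2 * x$i"
proof -
  have "pd i (\<lambda>x::real^'n. x \<bullet> x) x = (\<Sum>j\<in>UNIV. pd i (\<lambda>x. x$j * x$j) x)"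
    unfolding inner_vec_def inner_real_def
    by (intro pd_sum[where a = "1 + 1"] hom_poly_mult hom_poly_coord) simp
  also have "\<dots> = (\<Sum>j\<in>UNIV. if i = j then 2 * x$j else 0)"
    by (rule sum.cong) (auto simp: pd_mult[OF hom_poly_coord hom_poly_coord] pd_coord)
  finally show ?thesis by simp
qed

lemma laplacian_diff:
  assumes f: "hom_poly a f" and g: "hom_poly b g"
  shows "laplacian (\<lambda>x. f x - g x) x = laplacian f x - laplacian g x"
proof -
  have "pd i (\<lambda>x. f x - g x) = (\<lambda>x. pd i f x - pd i g x)" for i
    using pd_diff[OF f g] by blast
  then show ?thesis
    by (simp add: laplacian_def pd_diff[OF hom_poly_pd[OF f] hom_poly_pd[OF g]] sum_subtractf)
qed

lemma laplacian_scale: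
  assumes f: "hom_poly a f"
  shows "laplacian (\<lambda>x. c * f x) x = c * laplacian f x"
proof -
  have "pd i (\<lambda>x. c * f x) = (\<lambda>x. c * pd i f x)" for i
    using pd_scale[OF f] by blast
  then show ?thesis
    by (simp add: laplacian_def pd_scale[OF hom_poly_pd[OF f]] sum_distrib_left)
qed

lemma laplacian_sum:
  assumes "finite S" and f: "\<And>j. j \<in> S \<Longrightarrow> hom_poly a (f j)"
  shows "laplacian (\<lambda>x. \<Sum>j\<in>S. f j x) x = (\<Sum>j\<in>S. laplacian (f j) x)"
proof -
  have "pd i (\<lambda>x. \<Sum>j\<in>S. f j x) = (\<lambda>x. \<Sum>j\<in>S. pd i (f j) x)" for i
    by (rule ext) (rule pd_sum[OF \<open>finite S\<close> f])
  then have "laplacian (\<lambda>x. \<Sum>j\<in>S. f j x) x = (\<Sum>i\<in>UNIV. \<Sum>j\<in>S. pd i (pd i (f j)) x)"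
    by (simp add: laplacian_def pd_sum[OF \<open>finite S\<close> hom_poly_pd[OF f]])
  then show ?thesis
    by (simp add: laplacian_def sum.swap[of _ UNIV])
qed

lemma laplacian_mult:
  assumes f: "hom_poly a f" and g: "hom_poly b g"
  shows "laplacian (\<lambda>x. f x * g x) x
    = laplacian f x * g x + 2 * (\<Sum>i\<in>UNIV. pd i f x * pd i g x) + f x * laplacian g x"
proof -
  have "pd i (pd i (\<lambda>x. f x * g x)) x
      = pd i (pd i f) x * g x + 2 * (pd i f x * pd i g x) + f x * pd i (pd i g) x" for i
  proof -
    have "pd i (\<lambda>x. f x * g x) = (\<lambda>x. pd i f x * g x + f x * pd i g x)"
      using pd_mult[OF f g] by blast
    then have "pd i (pd i (\<lambda>x. f x * g x)) x = pd i (\<lambda>x. pd i f x * g x) x + pd i (\<lambda>x. f x * pd i g x) x"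
      by (simp add: pd_add[OF hom_poly_mult[OF hom_poly_pd[OF f] g] hom_poly_mult[OF f hom_poly_pd[OF g]]])
    then show ?thesis
      by (simp add: pd_mult[OF hom_poly_pd[OF f] g] pd_mult[OF f hom_poly_pd[OF g]])
  qed
  then show ?thesis
    by (simp add: laplacian_def sum.distrib sum_distrib_left sum_distrib_right)
qed

lemma laplacian_coord: "laplacian (\<lambda>x. x$j) x = 0"
proof -
  have "pd i (\<lambda>x. x$j) = (\<lambda>x. if i = j then 1 else 0)" for i
    using pd_coord by blast
  then show ?thesis
    by (simp add: laplacian_def pd_const)
qed

lemma laplacian_inner_self: "laplacian (\<lambda>x::real^'n. x \<bullet> x) x = 2 * real CARD('n)"
proof -
  have "pd i (\<lambda>x::real^'n. x \<bullet> x) = (\<lambda>x. 2 * x$i)" for i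
    using pd_inner_self by blast
  then show ?thesis
    by (simp add: laplacian_def pd_scale[OF hom_poly_coord] pd_coord)
qed

lemma pd_laplacian_commute:
  assumes f: "hom_poly k f"
  shows "pd j (laplacian f) x = laplacian (pd j f) x"
proof -
  have "pd j (laplacian f) x = (\<Sum>i\<in>UNIV. pd j (pd i (pd i f)) x)"
    unfolding laplacian_def[abs_def] by (rule pd_sum) (auto intro: hom_poly_pd f)
  also have "\<dots> = (\<Sum>i\<in>UNIV. pd i (pd i (pd j f)) x)"
    by (simp add: pd_commute[OF hom_poly_pd[OF f], of j] pd_commute[OF f, of j])
  finally show ?thesis by (simp add: laplacian_def)
qed

lemma continuous_on_pd: "hom_poly k f \<Longrightarrow> continuous_on UNIV (pd i f)"
  by (rule continuous_on_hom_poly[OF hom_poly_pd])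

lemma grad_inner_point: "hom_poly k f \<Longrightarrow> grad f x \<bullet> x = real k * f x"
  using euler_hom_poly[of k f x] by (simp add: grad_def inner_vec_def mult.commute)

section \<open>Averages over the sphere\<close>

lemma integrable_on_bounded_continuous_off_0:
  fixes g :: "real^'n \<Rightarrow> 'b::euclidean_space"
  assumes S: "S \<in> lmeasurable" and g: "continuous_on (S - {0}) g" and M: "\<And>x. x \<in> S \<Longrightarrow> norm (g x) \<le> M"
  shows "g integrable_on S"
proof -
  have S0: "S - {0} \<in> lmeasurable" using S by (simp add: fmeasurable_Diff)
  have "g integrable_on (S - {0})"
  proof (rule measurable_bounded_by_integrable_imp_integrable[where g = "\<lambda>_. M"])
    show "g \<in> borel_measurable (lebesgue_on (S - {0}))"
      using S0 by (intro continuous_imp_measurable_on_sets_lebesgue[OF g]) auto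
  qed (use S0 M in \<open>auto intro: integrable_on_const\<close>)
  then show ?thesis
    by (rule integrable_spike_set) (auto intro: negligible_subset[of "{0}"])
qed

lemma integrable_on_radial:
  fixes f :: "real^'n \<Rightarrow> 'b::euclidean_space"
  assumes f: "continuous_on UNIV f" and h: "continuous_on UNIV h"
    and S: "S \<in> lmeasurable" "bounded S"
  shows "(\<lambda>x. h x *\<^sub>R f (x /\<^sub>R norm x)) integrable_on S"
proof -
  obtain M where M: "M \<ge> 0" "\<And>y. y \<in> cball 0 1 \<Longrightarrow> norm (f y) \<le> M"
    using continuous_on_compact_bound[OF compact_cball[of 0 1] continuous_on_subset[OF f subset_UNIV]] by blast
  obtain r where r: "\<And>x. x \<in> S \<Longrightarrow> norm x \<le> r" using S(2) unfolding bounded_iff by blast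
  obtain N where N: "N \<ge> 0" "\<And>y. y \<in> cball 0 r \<Longrightarrow> norm (h y) \<le> N"
    using continuous_on_compact_bound[OF compact_cball[of 0 r] continuous_on_subset[OF h subset_UNIV]] by blast
  have "norm (h x *\<^sub>R f (x /\<^sub>R norm x)) \<le> N * M" if "x \<in> S" for x
  proof -
    have "norm (x /\<^sub>R norm x) \<le> 1" by (cases "x = 0") auto
    then have "norm (f (x /\<^sub>R norm x)) \<le> M" by (intro M(2)) simp
    moreover have "\<bar>h x\<bar> \<le> N" using N(2)[of x] r[OF that] by simp
    ultimately show ?thesis using mult_mono[OF _ _ N(1)] by simp
  qed
  moreover have "continuous_on (S - {0}) (\<lambda>x. h x *\<^sub>R f (x /\<^sub>R norm x))"
    by (intro continuous_intros continuous_on_compose2[OF f] continuous_on_subset[OF h]) auto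
  ultimately show ?thesis
    by (intro integrable_on_bounded_continuous_off_0[OF S(1)])
qed
lemma integrable_on_normalized:
  fixes f :: "real^'n \<Rightarrow> 'b::euclidean_space"
  assumes "continuous_on UNIV f" "S \<in> lmeasurable" "bounded S"
  shows "(\<lambda>x. f (x /\<^sub>R norm x)) integrable_on S"
  using integrable_on_radial[OF assms(1) continuous_on_const assms(2,3), of 1] by simp

lemma integrable_on_continuous_bounded:
  fixes f :: "real^'n \<Rightarrow> 'b::euclidean_space"
  assumes f: "continuous_on UNIV f" and S: "S \<in> lmeasurable" "bounded S"
  shows "f integrable_on S"
proof -
  obtain r where "\<And>x. x \<in> S \<Longrightarrow> norm x \<le> r" using S(2) unfolding bounded_iff by blast
  moreover obtain M where "\<And>y. y \<in> cball 0 r \<Longrightarrow> norm (f y) \<le> M"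
    using continuous_on_compact_bound[OF compact_cball[of 0 r] continuous_on_subset[OF f subset_UNIV]] by blast
  ultimately show ?thesis
    by (intro integrable_on_bounded_continuous_off_0[OF S(1) continuous_on_subset[OF f]]) auto
qed

lemma Av_zero [simp]: "Av (\<lambda>x. 0) = 0"
  by (simp add: Av_def)

lemma Av_add:
  "continuous_on UNIV f \<Longrightarrow> continuous_on UNIV g \<Longrightarrow> Av (\<lambda>x. f x + g x) = Av f + Av g"
  unfolding Av_def by (simp add: integral_add integrable_on_normalized scaleR_add_right)

lemma Av_diff:
  "continuous_on UNIV f \<Longrightarrow> continuous_on UNIV g \<Longrightarrow> Av (\<lambda>x. f x - g x) = Av f - Av g"
  unfolding Av_def by (simp add: integral_diff integrable_on_normalized scaleR_diff_right)

lemma Av_scale: "Av (\<lambda>x. c * f x) = c * (Av f :: real)"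
  unfolding Av_def by simp

lemma Av_sum:
  "finite S \<Longrightarrow> (\<And>j. j \<in> S \<Longrightarrow> continuous_on UNIV (f j)) \<Longrightarrow>
   Av (\<lambda>x. \<Sum>j\<in>S. f j x) = (\<Sum>j\<in>S. Av (f j))"
proof (induction S rule: finite_induct)
  case (insert a S)
  then have "Av (\<lambda>x. f a x + (\<Sum>j\<in>S. f j x)) = Av (f a) + Av (\<lambda>x. \<Sum>j\<in>S. f j x)"
    by (intro Av_add) (auto intro!: continuous_intros)
  with insert show ?case by simp
qed simp

lemma Av_cong_sphere: "(\<And>y. norm y = 1 \<Longrightarrow> f y = g y) \<Longrightarrow> Av f = Av g"
  unfolding Av_def
  by (rule arg_cong[where f = "\<lambda>u. u /\<^sub>R _"], rule integral_spike[of "{0}"]) auto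

lemma Av_mono:
  fixes f g :: "real^'n \<Rightarrow> real"
  assumes f: "continuous_on UNIV f" and g: "continuous_on UNIV g"
    and le: "\<And>y. norm y = 1 \<Longrightarrow> f y \<le> g y"
  shows "Av f \<le> Av g"
proof -
  have on_ball: "integral (ball 0 1 - {0}) h = integral (ball (0::real^'n) 1) h" for h :: "real^'n \<Rightarrow> real"
    by (rule integral_subset_negligible) (auto intro: negligible_subset[of "{0}"])
  have "integral (ball 0 1 - {0}) (\<lambda>x. f (x /\<^sub>R norm x)) \<le> integral (ball 0 1 - {0}) (\<lambda>x. g (x /\<^sub>R norm x))"
    by (intro integral_le integrable_on_normalized f g le) (auto simp: fmeasurable_Diff)
  moreover have "0 < measure lborel (ball (0::real^'n) 1)"
    using content_ball_pos[of 1 "0::real^'n"] by simp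
  ultimately show ?thesis
    unfolding Av_def on_ball by (simp add: divide_inverse[symmetric] divide_right_mono)
qed

lemma Av_component:
  "continuous_on UNIV (f :: real^'n \<Rightarrow> real^'m) \<Longrightarrow> Av f $ j = Av (\<lambda>x. f x $ j)"
  unfolding Av_def
  using integral_component_eq_cart[OF integrable_on_normalized[of f "ball 0 1"], of j] by simp

lemma Av_inner_point_sq_le:
  fixes s :: "real^'n \<Rightarrow> real^'n"
  assumes s: "continuous_on UNIV s"
  shows "0 \<le> Av (\<lambda>x. (s x \<bullet> x)\<^sup>2)" and "Av (\<lambda>x. (s x \<bullet> x)\<^sup>2) \<le> Av (\<lambda>x. s x \<bullet> s x)"
proof -
  show "0 \<le> Av (\<lambda>x. (s x \<bullet> x)\<^sup>2)"
    using Av_mono[of "\<lambda>x. 0" "\<lambda>x. (s x \<bullet> x)\<^sup>2"] s by (simp add: continuous_intros)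
  show "Av (\<lambda>x. (s x \<bullet> x)\<^sup>2) \<le> Av (\<lambda>x. s x \<bullet> s x)"
  proof (rule Av_mono)
    fix y :: "real^'n" assume "norm y = 1"
    then have "\<bar>s y \<bullet> y\<bar> \<le> norm (s y)" using Cauchy_Schwarz_ineq2[of "s y" y] by simp
    then show "(s y \<bullet> y)\<^sup>2 \<le> s y \<bullet> s y"
      by (metis abs_ge_zero power2_abs power2_norm_eq_inner power_mono)
  qed (use s in \<open>auto intro!: continuous_intros\<close>)
qed

section \<open>Radial integration\<close>

lemma cube_contains_ball: "ball (0::real^'n) r \<subseteq> cbox (- vec r) (vec r)"
proof
  fix x :: "real^'n" assume "x \<in> ball 0 r"
  then have "\<bar>x$i\<bar> \<le> r" for i using component_le_norm_cart[of x i] by simp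
  then show "x \<in> cbox (- vec r) (vec r)" unfolding mem_box_cart by (simp add: abs_le_iff) (meson minus_le_iff)
qed

lemma integral_ball_scale:
  fixes g :: "real^'n \<Rightarrow> real"
  assumes g: "g integrable_on ball 0 r" and r: "r > 0"
  shows "integral (ball 0 1) (\<lambda>x. g (r *\<^sub>R x)) = integral (ball 0 r) g / r ^ CARD('n)"
proof -
  define K where "K = cbox (- vec r) (vec r :: real^'n)"
  define g' where "g' = (\<lambda>x. if x \<in> ball 0 r then g x else 0)"
  have sub: "ball 0 r \<subseteq> K" unfolding K_def by (rule cube_contains_ball)
  then have bK: "ball 0 r \<inter> K = ball 0 r" by blast
  have "g' integrable_on K"
    unfolding g'_def by (subst integrable_restrict_Int) (simp add: bK g)
  moreover have "integral K g' = integral (ball 0 r) g"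
    unfolding g'_def by (subst integral_restrict_Int) (simp add: bK)
  ultimately have "(g' has_integral integral (ball 0 r) g) K"
    using integrable_integral by fastforce
  then have "((\<lambda>x. g' (r *\<^sub>R x + 0)) has_integral (1 / \<bar>r\<bar> ^ DIM(real^'n)) *\<^sub>R integral (ball 0 r) g)
      ((\<lambda>x. (1 / r) *\<^sub>R x + - ((1 / r) *\<^sub>R 0)) ` K)"
    unfolding K_def using r by (intro has_integral_affinity) auto
  then have int: "((\<lambda>x. g' (r *\<^sub>R x)) has_integral integral (ball 0 r) g / r ^ CARD('n)) ((\<lambda>x. x /\<^sub>R r) ` K)"
    using r by (simp add: divide_inverse mult.commute)
  have ball_K: "ball 0 1 \<subseteq> (\<lambda>x. x /\<^sub>R r) ` K"
  proof
    fix x :: "real^'n" assume "x \<in> ball 0 1"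
    then have "r *\<^sub>R x \<in> K" using sub r by auto
    then show "x \<in> (\<lambda>x. x /\<^sub>R r) ` K" using r by (auto intro!: image_eqI[of _ _ "r *\<^sub>R x"])
  qed
  have g'_scaled: "g' (r *\<^sub>R x) = (if x \<in> ball 0 1 then g (r *\<^sub>R x) else 0)" for x
    unfolding g'_def using r by simp
  have "integral ((\<lambda>x. x /\<^sub>R r) ` K) (\<lambda>x. g' (r *\<^sub>R x))
      = integral (ball 0 1 \<inter> (\<lambda>x. x /\<^sub>R r) ` K) (\<lambda>x. g (r *\<^sub>R x))"
    unfolding g'_scaled by (rule integral_restrict_Int)
  with ball_K int show ?thesis
    by (simp add: integral_unique Int_absorb2)
qed

lemma radial_integral_ball_scale:
  fixes f :: "real^'n \<Rightarrow> real"
  assumes f: "continuous_on UNIV f" and r: "r > 0"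
  shows "integral (ball 0 r) (\<lambda>x. norm x ^ p * f (x /\<^sub>R norm x))
       = r ^ (CARD('n) + p) * integral (ball 0 1) (\<lambda>x. norm x ^ p * f (x /\<^sub>R norm x))"
    (is "integral _ ?F = _ * integral _ ?F")
proof -
  have normalized: "(r *\<^sub>R x) /\<^sub>R norm (r *\<^sub>R x) = x /\<^sub>R norm x" for x :: "real^'n"
    using r by (cases "x = 0") auto
  have "?F integrable_on ball 0 r"
    using integrable_on_radial[OF f, of "\<lambda>x. norm x ^ p" "ball 0 r"] by (simp add: continuous_intros)
  then have "integral (ball 0 1) (\<lambda>x. ?F (r *\<^sub>R x)) = integral (ball 0 r) ?F / r ^ CARD('n)"
    using r by (rule integral_ball_scale)
  moreover have "integral (ball 0 1) (\<lambda>x. ?F (r *\<^sub>R x)) = r ^ p * integral (ball 0 1) ?F"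
    using r by (simp only: normalized) (simp add: power_mult_distrib mult.assoc)
  ultimately show ?thesis
    using r by (simp add: field_simps power_add)
qed

lemma power_ratio_squeeze:
  fixes a b :: real
  assumes "\<And>r. 1 < r \<Longrightarrow> (r ^ n - 1) * a \<le> (r ^ m - 1) * b \<and> (r ^ m - 1) * b \<le> r ^ p * ((r ^ n - 1) * a)"
  shows "real m * b = real n * a"
proof -
  define S where "S k r = (\<Sum>i<k. r ^ i :: real)" for k r
  have pow: "r ^ k - 1 = (r - 1) * S k r" for k r
    unfolding S_def by (rule power_diff_1_eq)
  have limit: "0 \<le> g 1" if "isCont g 1" "\<And>r. 1 < r \<Longrightarrow> 0 \<le> g r" for g :: "real \<Rightarrow> real"
  proof (rule tendsto_lowerbound)
    show "(g \<longlongrightarrow> g 1) (at_right 1)"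
      using that(1) by (simp add: isCont_def filterlim_at_split)
    show "\<forall>\<^sub>F r in at_right 1. 0 \<le> g r"
      using eventually_at_right_less[of 1] by eventually_elim (use that(2) in auto)
  qed simp
  have "0 \<le> S m 1 * b - S n 1 * a"
  proof (rule limit)
    show "0 \<le> S m r * b - S n r * a" if "1 < r" for r
      using assms[OF that] that by (simp add: pow mult.assoc)
  qed (simp add: S_def continuous_intros)
  moreover have "0 \<le> 1 ^ p * (S n 1 * a) - S m 1 * b"
  proof (rule limit)
    show "0 \<le> r ^ p * (S n r * a) - S m r * b" if "1 < r" for r
      using assms[OF that] that by (simp add: pow mult.assoc mult.left_commute)
  qed (simp add: S_def continuous_intros)
  ultimately show ?thesis by (simp add: S_def)
qed

lemma radial_integral_annulus:
  fixes f :: "real^'n \<Rightarrow> real"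
  assumes f: "continuous_on UNIV f" and r: "r > 1"
  shows "integral (ball 0 r - ball 0 1) (\<lambda>x. norm x ^ p * f (x /\<^sub>R norm x))
       = (r ^ (CARD('n) + p) - 1) * integral (ball 0 1) (\<lambda>x. norm x ^ p * f (x /\<^sub>R norm x))"
proof -
  have "ball (0::real^'n) 1 - ball 0 r = {}" using r by auto
  then have "integral (ball 0 r - ball 0 1) (\<lambda>x. norm x ^ p * f (x /\<^sub>R norm x))
      = integral (ball 0 r) (\<lambda>x. norm x ^ p * f (x /\<^sub>R norm x))
        - integral (ball 0 1) (\<lambda>x. norm x ^ p * f (x /\<^sub>R norm x))"
    using integrable_on_radial[OF f continuous_on_power[OF continuous_on_norm_id]]
    by (intro integral_setdiff) auto
  then show ?thesis
    using radial_integral_ball_scale[OF f, of r p] r by (simp add: algebra_simps)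
qed

text \<open>Both sides scale like powers of the radius, so comparing them on thin annuli
  \<open>1 \<le> norm x \<le> r\<close>, where \<open>1 \<le> norm x ^ p \<le> r ^ p\<close>, and letting \<open>r \<rightarrow> 1\<close> yields the identity.\<close>

lemma radial_integral_nonneg:
  fixes f :: "real^'n \<Rightarrow> real"
  assumes f: "continuous_on UNIV f" and nonneg: "\<And>y. 0 \<le> f y"
  shows "real (CARD('n) + p) * integral (ball 0 1) (\<lambda>x. norm x ^ p * f (x /\<^sub>R norm x))
       = real CARD('n) * integral (ball 0 1) (\<lambda>x. f (x /\<^sub>R norm x))"
proof -
  define F where "F q x = norm x ^ q * f (x /\<^sub>R norm x)" for q and x :: "real^'n"
  define J where "J q = integral (ball 0 1) (F q)" for q
  have "(r ^ CARD('n) - 1) * J 0 \<le> (r ^ (CARD('n) + p) - 1) * J p \<and>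
        (r ^ (CARD('n) + p) - 1) * J p \<le> r ^ p * ((r ^ CARD('n) - 1) * J 0)" if r: "r > 1" for r
  proof -
    have bounds: "F 0 x \<le> F p x \<and> F p x \<le> r ^ p * F 0 x" if "x \<in> ball 0 r - ball 0 1" for x
    proof -
      have x: "1 \<le> norm x" "norm x \<le> r" using that by auto
      have "1 \<le> norm x ^ p" using x(1) by (rule one_le_power)
      moreover have "norm x ^ p \<le> r ^ p" using x by (intro power_mono) auto
      ultimately show ?thesis
        using nonneg[of "x /\<^sub>R norm x"] by (simp add: F_def mult_right_mono mult_le_cancel_right1)
    qed
    have int: "F q integrable_on ball 0 r - ball 0 1" for q
      unfolding F_def using integrable_on_radial[OF f continuous_on_power[OF continuous_on_norm_id]]
      by (simp add: fmeasurable_Diff bounded_diff)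
    have "integral (ball 0 r - ball 0 1) (F 0) \<le> integral (ball 0 r - ball 0 1) (F p)"
      using bounds by (intro integral_le int) auto
    moreover have "integral (ball 0 r - ball 0 1) (F p) \<le> integral (ball 0 r - ball 0 1) (\<lambda>x. r ^ p * F 0 x)"
      using bounds by (intro integral_le int integrable_on_mult_right) auto
    ultimately show ?thesis
      using radial_integral_annulus[OF f r, of 0] radial_integral_annulus[OF f r, of p]
      by (simp add: F_def[abs_def] J_def)
  qed
  then have "real (CARD('n) + p) * J p = real CARD('n) * J 0"
    by (rule power_ratio_squeeze)
  then show ?thesis by (simp add: J_def F_def[abs_def])
qed

lemma radial_integral:
  fixes f :: "real^'n \<Rightarrow> real"
  assumes f: "continuous_on UNIV f"
  shows "real (CARD('n) + p) * integral (ball 0 1) (\<lambda>x. norm x ^ p * f (x /\<^sub>R norm x))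
       = real CARD('n) * integral (ball 0 1) (\<lambda>x. f (x /\<^sub>R norm x))"
proof -
  define fpos where "fpos y = max (f y) 0" for y
  define fneg where "fneg y = max (- f y) 0" for y
  have cont: "continuous_on UNIV fpos" "continuous_on UNIV fneg"
    unfolding fpos_def fneg_def by (intro continuous_intros f)+
  have f_eq: "f y = fpos y - fneg y" for y by (simp add: fpos_def fneg_def max_def)
  have split: "integral (ball 0 1) (\<lambda>x. g x * f (x /\<^sub>R norm x))
      = integral (ball 0 1) (\<lambda>x. g x * fpos (x /\<^sub>R norm x))
      - integral (ball 0 1) (\<lambda>x. g x * fneg (x /\<^sub>R norm x))" if g: "continuous_on UNIV g" for g
    unfolding f_eq right_diff_distrib
    using integrable_on_radial[OF cont(1) g, of "ball 0 1"] integrable_on_radial[OF cont(2) g, of "ball 0 1"]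
    by (intro integral_diff) simp_all
  have pos: "real (CARD('n) + p) * integral (ball 0 1) (\<lambda>x. norm x ^ p * fpos (x /\<^sub>R norm x))
       = real CARD('n) * integral (ball 0 1) (\<lambda>x. fpos (x /\<^sub>R norm x))"
    by (rule radial_integral_nonneg[OF cont(1)]) (simp add: fpos_def)
  have neg: "real (CARD('n) + p) * integral (ball 0 1) (\<lambda>x. norm x ^ p * fneg (x /\<^sub>R norm x))
       = real CARD('n) * integral (ball 0 1) (\<lambda>x. fneg (x /\<^sub>R norm x))"
    by (rule radial_integral_nonneg[OF cont(2)]) (simp add: fneg_def)
  show ?thesis
    using split[of "\<lambda>x. 1"] split[of "\<lambda>x. norm x ^ p"] pos neg
    by (simp add: continuous_intros right_diff_distrib)
qed

definition ball_moment :: "nat \<Rightarrow> (real^'n \<Rightarrow> real) \<Rightarrow> real" where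
  "ball_moment j h = integral (ball 0 1) (\<lambda>x. (x \<bullet> x) ^ j * h x)"

lemma radial_integral_hom_poly:
  fixes h :: "real^'n \<Rightarrow> real"
  assumes h: "hom_poly m h"
  shows "real (CARD('n) + 2 * j + m) * ball_moment j h
       = real CARD('n) * measure lborel (ball (0::real^'n) 1) * Av h"
proof -
  have "ball_moment j h = integral (ball 0 1) (\<lambda>x. norm x ^ (2 * j + m) * h (x /\<^sub>R norm x))"
    unfolding ball_moment_def
  proof (rule integral_spike[of "{0}"])
    fix x :: "real^'n" assume "x \<in> ball 0 1 - {0}"
    then have "h x = norm x ^ m * h (x /\<^sub>R norm x)"
      using hom_poly_scaleR[OF h, of "norm x" "x /\<^sub>R norm x"] by simp
    then show "norm x ^ (2 * j + m) * h (x /\<^sub>R norm x) = (x \<bullet> x) ^ j * h x"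
      by (simp add: power_add power_mult dot_square_norm)
  qed auto
  moreover have "0 < measure lborel (ball (0::real^'n) 1)"
    using content_ball_pos[of 1 "0::real^'n"] by simp
  ultimately show ?thesis
    using radial_integral[OF continuous_on_hom_poly[OF h], of "2 * j + m"] by (simp add: Av_def add.assoc)
qed

section \<open>Integration by parts on the sphere\<close>

lemma has_integral_translate_UNIV:
  fixes F :: "real^'n \<Rightarrow> real"
  assumes F: "(F has_integral I) (cbox a b)" and zero: "\<And>x. x \<notin> cbox a b \<Longrightarrow> F x = 0"
  shows "((\<lambda>x. F (x + c)) has_integral I) UNIV"
proof (rule has_integral_on_superset[OF has_integral_shift_cbox[OF F]])
  show "F (x + c) = 0" if "x \<notin> cbox (a - c) (b - c)" for x
    using that by (intro zero) (force simp: mem_box inner_diff_left inner_add_left)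
qed auto

lemma difference_quotient_axis_bound:
  fixes F D :: "real^'n \<Rightarrow> real"
  assumes deriv: "\<And>t. ((\<lambda>t. F (x + t *\<^sub>R axis i 1)) has_real_derivative D (x + t *\<^sub>R axis i 1)) (at t)"
    and bound: "\<And>y. \<bar>D y\<bar> \<le> M" and h: "h > 0"
  shows "\<bar>(F (x + h *\<^sub>R axis i 1) - F x) / h\<bar> \<le> M"
proof -
  obtain t where "F (x + h *\<^sub>R axis i 1) - F (x + 0 *\<^sub>R axis i 1) = (h - 0) * D (x + t *\<^sub>R axis i 1)"
    using MVT2[OF h deriv] by blast
  then show ?thesis using h bound[of "x + t *\<^sub>R axis i 1"] by simp
qed

lemma has_integral_difference_quotient_axis:
  fixes F :: "real^'n \<Rightarrow> real"
  assumes F: "continuous_on UNIV F" and F0: "\<And>x. 1 \<le> norm x \<Longrightarrow> F x = 0"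
  shows "((\<lambda>x. (F (x + h *\<^sub>R axis i 1) - F x) / h) has_integral 0) UNIV"
proof -
  have "F integrable_on cbox (- vec 1) (vec 1)"
    by (rule integrable_continuous[OF continuous_on_subset[OF F subset_UNIV]])
  then obtain I where "(F has_integral I) (cbox (- vec 1) (vec 1))" by blast
  moreover have "F x = 0" if "x \<notin> cbox (- vec 1) (vec 1)" for x
  proof -
    have "x \<notin> ball 0 1" using that cube_contains_ball[of 1] by blast
    then show ?thesis by (intro F0) (simp add: not_less)
  qed
  ultimately have shifted: "((\<lambda>x. F (x + c)) has_integral I) UNIV" for c
    by (rule has_integral_translate_UNIV)
  have "((\<lambda>x. inverse h *\<^sub>R (F (x + h *\<^sub>R axis i 1) - F (x + 0))) has_integral inverse h *\<^sub>R (I - I)) UNIV"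
    by (intro has_integral_cmul has_integral_diff shifted)
  then show ?thesis by (simp add: divide_inverse mult.commute)
qed

lemma difference_quotient_axis_LIMSEQ:
  fixes F :: "real^'n \<Rightarrow> real"
  assumes "((\<lambda>t. F (x + t *\<^sub>R axis i 1)) has_real_derivative D) (at 0)"
    and "h \<longlonglongrightarrow> 0" and "\<And>m. h m \<noteq> 0"
  shows "(\<lambda>m. (F (x + h m *\<^sub>R axis i 1) - F x) / h m) \<longlonglongrightarrow> D"
proof -
  have quotient: "(\<lambda>t. (F (x + t *\<^sub>R axis i 1) - F x) / t) \<midarrow>0\<rightarrow> D"
    using DERIV_D[OF assms(1)] by simp
  show ?thesis
    using LIMSEQ_SEQ_conv[THEN iffD2, OF quotient, rule_format, of h] assms(2,3) by simp
qed

lemma integral_axis_derivative_eq_0: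
  fixes F D :: "real^'n \<Rightarrow> real"
  assumes F: "continuous_on UNIV F" and D: "continuous_on UNIV D"
    and F0: "\<And>x. 1 \<le> norm x \<Longrightarrow> F x = 0" and D0: "\<And>x. 1 \<le> norm x \<Longrightarrow> D x = 0"
    and deriv: "\<And>x t. ((\<lambda>t. F (x + t *\<^sub>R axis i 1)) has_real_derivative D (x + t *\<^sub>R axis i 1)) (at t)"
  shows "integral UNIV D = 0"
proof -
  define K where "K = cbox (- vec 2) (vec 2 :: real^'n)"
  define h where "h m = inverse (real (Suc m))" for m
  have h: "0 < h m" "h m \<le> 1" for m by (auto simp: h_def field_simps)
  define q where "q m x = (F (x + h m *\<^sub>R axis i 1) - F x) / h m" for m x
  have q_int: "(q m has_integral 0) UNIV" for m
    unfolding q_def[abs_def] by (rule has_integral_difference_quotient_axis[OF F F0])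
  obtain M where M: "\<And>y. y \<in> cball 0 1 \<Longrightarrow> norm (D y) \<le> M"
    using continuous_on_compact_bound[OF compact_cball[of 0 1] continuous_on_subset[OF D subset_UNIV]] by blast
  have D_bound: "\<bar>D y\<bar> \<le> M" for y
    using M[of y] M[of 0] D0[of y] by (cases "norm y \<le> 1") auto
  have q_bound: "norm (q m x) \<le> (if x \<in> K then M else 0)" for m x
  proof (cases "x \<in> K")
    case True
    then show ?thesis
      using difference_quotient_axis_bound[OF deriv D_bound h(1)] by (simp add: q_def)
  next
    case False
    then have "2 \<le> norm x" using cube_contains_ball[of 2] by (auto simp: K_def not_less)
    moreover have "norm x \<le> norm (x + h m *\<^sub>R axis i 1) + h m"
      using norm_triangle_sub[of x "x + h m *\<^sub>R axis i 1"] h(1)[of m] by simp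
    ultimately show ?thesis using False h(2)[of m] F0 by (simp add: q_def)
  qed
  have "h \<longlonglongrightarrow> 0" unfolding h_def by (rule LIMSEQ_inverse_real_of_nat)
  then have q_lim: "(\<lambda>m. q m x) \<longlonglongrightarrow> D x" for x
    unfolding q_def using deriv[of x 0] h(1)
    by (intro difference_quotient_axis_LIMSEQ) (auto simp: less_imp_neq[symmetric])
  have "(\<lambda>x. if x \<in> K then M else 0) integrable_on UNIV"
    using integrable_restrict_UNIV[of K "\<lambda>_. M"] integrable_const[of M "- vec 2" "vec 2"]
    by (simp add: K_def)
  then have "(\<lambda>m. integral UNIV (q m)) \<longlonglongrightarrow> integral UNIV D"
    using q_int q_bound q_lim by (intro dominated_convergence(2)) auto
  moreover have "integral UNIV (q m) = 0" for m
    using q_int by (rule integral_unique)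
  ultimately show ?thesis
    using LIMSEQ_unique[OF _ tendsto_const] by fastforce
qed

lemma max_0_square_has_derivative: "((\<lambda>u. (max 0 u)\<^sup>2) has_real_derivative 2 * max 0 u) (at u)"
proof (cases u "0::real" rule: linorder_cases)
  case less
  have "((\<lambda>_. 0) has_real_derivative 2 * max 0 u) (at u)" using less by simp
  then show ?thesis
    by (rule has_field_derivative_transform_within_open[where S = "{..<0}"]) (use less in auto)
next
  case equal
  have "((\<lambda>h. ((max 0 (0 + h))\<^sup>2 - (max 0 0)\<^sup>2) / h) \<longlongrightarrow> (0::real)) (at 0)"
  proof (rule Lim_null_comparison)
    show "\<forall>\<^sub>F h in at 0. norm (((max 0 (0 + h))\<^sup>2 - (max 0 0)\<^sup>2) / h) \<le> norm (h::real)"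
      by (rule always_eventually) (simp add: max_def power2_eq_square abs_mult)
  qed (intro tendsto_eq_intros, auto)
  then show ?thesis using equal by (simp add: DERIV_def)
next
  case greater
  have "((\<lambda>v. v\<^sup>2) has_real_derivative 2 * max 0 u) (at u)"
    using greater by (auto intro!: derivative_eq_intros)
  then show ?thesis
    by (rule has_field_derivative_transform_within_open[where S = "{0<..}"]) (use greater in auto)
qed

definition bump :: "real^'n \<Rightarrow> real" where
  "bump x = (max 0 (1 - x \<bullet> x))\<^sup>2"

lemma bump_has_derivative_axis:
  "((\<lambda>t. bump (x + t *\<^sub>R axis i 1)) has_real_derivative
     - 4 * max 0 (1 - (x + t *\<^sub>R axis i 1) \<bullet> (x + t *\<^sub>R axis i 1)) * (x + t *\<^sub>R axis i 1)$i) (at t)"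
proof -
  have line: "(x + s *\<^sub>R axis i 1) \<bullet> (x + s *\<^sub>R axis i 1) = x \<bullet> x + 2 * s * x$i + s\<^sup>2" for s
    by (simp add: inner_add_left inner_add_right inner_axis inner_axis' power2_eq_square
        algebra_simps inner_commute)
  have "((\<lambda>s. 1 - (x + s *\<^sub>R axis i 1) \<bullet> (x + s *\<^sub>R axis i 1)) has_real_derivative
      - 2 * (x + t *\<^sub>R axis i 1)$i) (at t)"
    unfolding line by (auto intro!: derivative_eq_intros simp: axis_def)
  from DERIV_chain2[OF max_0_square_has_derivative this] show ?thesis
    unfolding bump_def by (simp add: algebra_simps)
qed

lemma bump_eq_0: "1 \<le> norm x \<Longrightarrow> max 0 (1 - x \<bullet> x) = 0"
  using one_le_power[of "norm x" 2] by (simp add: dot_square_norm)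

lemma integral_ball_bump_pd:
  fixes G :: "real^'n \<Rightarrow> real"
  assumes G: "hom_poly d G"
  shows "integral (ball 0 1) (\<lambda>x. (1 - x \<bullet> x)\<^sup>2 * pd i G x - 4 * (1 - x \<bullet> x) * (x$i * G x)) = 0"
proof -
  define D where "D x = pd i G x * bump x - 4 * max 0 (1 - x \<bullet> x) * x$i * G x" for x
  have cont: "continuous_on UNIV D" "continuous_on UNIV (\<lambda>x. G x * bump x)"
    unfolding D_def bump_def
    by (intro continuous_intros continuous_on_hom_poly[OF G] continuous_on_hom_poly[OF hom_poly_pd[OF G]])+
  have "((\<lambda>t. G (x + t *\<^sub>R axis i 1) * bump (x + t *\<^sub>R axis i 1)) has_real_derivative
      D (x + t *\<^sub>R axis i 1)) (at t)" for x t
    using DERIV_mult[OF hom_poly_has_derivative_axis[OF G] bump_has_derivative_axis]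
    by (simp add: D_def algebra_simps)
  moreover have D_outside: "D x = 0" if "x \<notin> ball 0 1" for x
    using that bump_eq_0[of x] by (simp add: D_def bump_def)
  ultimately have "integral UNIV D = 0"
    using bump_eq_0 by (intro integral_axis_derivative_eq_0[OF cont(2,1), where i = i]) (auto simp: bump_def)
  moreover have "integral UNIV D = integral (ball 0 1) D"
    by (intro integral_unique has_integral_on_superset[OF integrable_integral] integrable_on_continuous_bounded
        cont D_outside) auto
  moreover have "integral (ball 0 1) D
      = integral (ball 0 1) (\<lambda>x. (1 - x \<bullet> x)\<^sup>2 * pd i G x - 4 * (1 - x \<bullet> x) * (x$i * G x))"
  proof (rule integral_cong)
    fix x :: "real^'n" assume "x \<in> ball 0 1"
    then have "norm x ^ 2 < 1" by (simp add: power_less_one_iff)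
    then show "D x = (1 - x \<bullet> x)\<^sup>2 * pd i G x - 4 * (1 - x \<bullet> x) * (x$i * G x)"
      by (simp add: D_def bump_def dot_square_norm algebra_simps)
  qed
  ultimately show ?thesis by simp
qed

lemma integral_ball_bump_moments:
  fixes P Q :: "real^'n \<Rightarrow> real"
  assumes "continuous_on UNIV P" "continuous_on UNIV Q"
  shows "integral (ball 0 1) (\<lambda>x. (1 - x \<bullet> x)\<^sup>2 * P x - 4 * (1 - x \<bullet> x) * Q x)
    = ball_moment 0 P - 2 * ball_moment 1 P + ball_moment 2 P - 4 * ball_moment 0 Q + 4 * ball_moment 1 Q"
proof -
  have int: "(\<lambda>x. c * ((x \<bullet> x) ^ j * h x)) integrable_on ball 0 1"
    if "continuous_on UNIV h" for c j and h :: "real^'n \<Rightarrow> real"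
    by (intro integrable_on_continuous_bounded continuous_intros that) auto
  have "integral (ball 0 1) (\<lambda>x. (1 - x \<bullet> x)\<^sup>2 * P x - 4 * (1 - x \<bullet> x) * Q x)
    = integral (ball 0 1) (\<lambda>x. 1 * ((x \<bullet> x) ^ 0 * P x) - 2 * ((x \<bullet> x) ^ 1 * P x)
      + 1 * ((x \<bullet> x) ^ 2 * P x) - 4 * ((x \<bullet> x) ^ 0 * Q x) + 4 * ((x \<bullet> x) ^ 1 * Q x))"
    by (simp add: power2_eq_square algebra_simps)
  also have "\<dots> = ball_moment 0 P - 2 * ball_moment 1 P + ball_moment 2 P - 4 * ball_moment 0 Q + 4 * ball_moment 1 Q"
    unfolding ball_moment_def using assms
    by (simp only: integral_add integral_diff integrable_add integrable_diff int integral_mult_right)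
  finally show ?thesis .
qed

text \<open>Integrating \<open>\<partial>\<^sub>i (G \<cdot> bump)\<close> over the whole space gives zero; on the ball the integrand is
  a combination of moments, which the radial identity turns into sphere averages.\<close>

lemma Av_pd_hom_poly:
  fixes G :: "real^'n \<Rightarrow> real"
  assumes G: "hom_poly d G"
  shows "Av (pd i G) = (real CARD('n) + real d - 1) * Av (\<lambda>y. y$i * G y)"
proof -
  define n where "n = real CARD('n)"
  define B where "B = n * measure lborel (ball (0::real^'n) 1)"
  define P where "P = pd i G"
  define Q where "Q = (\<lambda>y::real^'n. y$i * G y)"
  have hP: "hom_poly (d - 1) P" unfolding P_def by (rule hom_poly_pd[OF G])
  have hQ: "hom_poly (1 + d) Q" unfolding Q_def by (rule hom_poly_mult[OF hom_poly_coord G])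
  have B: "B > 0" using content_ball_pos[of 1 "0::real^'n"] by (simp add: B_def n_def)
  have RQ: "(n + 2 * real j + real d + 1) * ball_moment j Q = B * Av Q" for j
    using radial_integral_hom_poly[OF hQ, of j] by (simp add: B_def n_def algebra_simps)
  have RP: "(n + 2 * real j + real d - 1) * ball_moment j P = B * Av P" for j
  proof (cases d)
    case 0
    then have "P = (\<lambda>x. 0)" using G hom_poly_0_pd by (auto simp: P_def)
    then show ?thesis by (simp add: ball_moment_def)
  next
    case (Suc d')
    then show ?thesis
      using radial_integral_hom_poly[OF hP, of j] by (simp add: B_def n_def algebra_simps)
  qed
  have Z: "ball_moment 0 P - 2 * ball_moment 1 P + ball_moment 2 P - 4 * ball_moment 0 Q + 4 * ball_moment 1 Q = 0"
    using integral_ball_bump_pd[OF G, of i] integral_ball_bump_moments[of P Q]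
      continuous_on_hom_poly[OF hP] continuous_on_hom_poly[OF hQ]
    by (simp add: P_def Q_def)
  define u where "u = n + real d + 1"
  have "(u - 2) * u * (u + 2) * (ball_moment 0 P - 2 * ball_moment 1 P + ball_moment 2 P
        - 4 * ball_moment 0 Q + 4 * ball_moment 1 Q)
      = u * (u + 2) * ((u - 2) * ball_moment 0 P) - 2 * (u - 2) * (u + 2) * (u * ball_moment 1 P)
        + (u - 2) * u * ((u + 2) * ball_moment 2 P) - 4 * (u - 2) * (u + 2) * (u * ball_moment 0 Q)
        + 4 * (u - 2) * u * ((u + 2) * ball_moment 1 Q)"
    by (simp add: algebra_simps)
  also have "\<dots> = 8 * B * (Av P - (u - 2) * Av Q)"
    using RP[of 0] RP[of 1] RP[of 2] RQ[of 0] RQ[of 1] by (simp add: u_def algebra_simps)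
  finally have "Av P = (u - 2) * Av Q" using Z B by simp
  then show ?thesis by (simp add: P_def Q_def u_def n_def)
qed

lemma Av_div_hom_poly:
  fixes G :: "'n \<Rightarrow> real^'n \<Rightarrow> real"
  assumes G: "\<And>i. hom_poly d (G i)"
  shows "Av (\<lambda>x. \<Sum>i\<in>UNIV. pd i (G i) x) = (real CARD('n) + real d - 1) * Av (\<lambda>x. \<Sum>i\<in>UNIV. x$i * G i x)"
proof -
  have "Av (\<lambda>x. \<Sum>i\<in>UNIV. pd i (G i) x) = (\<Sum>i\<in>UNIV. Av (pd i (G i)))"
    by (intro Av_sum continuous_on_hom_poly[OF hom_poly_pd[OF G]]) auto
  also have "\<dots> = (real CARD('n) + real d - 1) * (\<Sum>i\<in>UNIV. Av (\<lambda>x. x$i * G i x))"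
    by (simp add: Av_pd_hom_poly[OF G] sum_distrib_left)
  also have "(\<Sum>i\<in>UNIV. Av (\<lambda>x. x$i * G i x)) = Av (\<lambda>x. \<Sum>i\<in>UNIV. x$i * G i x)"
    by (intro Av_sum[symmetric] continuous_intros continuous_on_hom_poly[OF G]) auto
  finally show ?thesis .
qed

section \<open>Spherical harmonics\<close>

lemma Av_harmonic_eq_0:
  fixes p :: "real^'n \<Rightarrow> real"
  assumes n: "CARD('n) \<ge> 2" and p: "hom_poly m p" and m: "m \<ge> 1" and harm: "\<And>x. laplacian p x = 0"
  shows "Av p = 0"
proof -
  have "0 = Av (\<lambda>x. \<Sum>i\<in>UNIV. pd i (pd i p) x)"
    using harm by (simp add: laplacian_def)
  also have "\<dots> = (real CARD('n) + real (m - 1) - 1) * Av (\<lambda>x. \<Sum>i\<in>UNIV. x$i * pd i p x)"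
    by (rule Av_div_hom_poly[OF hom_poly_pd[OF p]])
  also have "\<dots> = (real CARD('n) + real m - 2) * (real m * Av p)"
    using m by (simp add: euler_hom_poly[OF p] Av_scale of_nat_diff)
  finally show ?thesis using n m by simp
qed

lemma Av_grad_inner_harmonic:
  fixes a b :: "real^'n \<Rightarrow> real"
  assumes a: "hom_poly \<alpha> a" and b: "hom_poly \<beta> b" and harm: "\<And>x. laplacian b x = 0"
  shows "Av (\<lambda>x. \<Sum>i\<in>UNIV. pd i a x * pd i b x)
    = real \<beta> * (real CARD('n) + real \<alpha> + real \<beta> - 2) * Av (\<lambda>x. a x * b x)"
proof (cases "\<beta> = 0")
  case True
  then show ?thesis using hom_poly_0_pd[of b] b by simp
next
  case False
  define G where "G i = (\<lambda>x. a x * pd i b x)" for i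
  have "(\<Sum>i\<in>UNIV. pd i (G i) x) = (\<Sum>i\<in>UNIV. pd i a x * pd i b x) + a x * laplacian b x" for x
    by (simp add: G_def pd_mult[OF a hom_poly_pd[OF b]] sum.distrib laplacian_def sum_distrib_left)
  then have "Av (\<lambda>x. \<Sum>i\<in>UNIV. pd i a x * pd i b x) = Av (\<lambda>x. \<Sum>i\<in>UNIV. pd i (G i) x)"
    using harm by simp
  also have "\<dots> = (real CARD('n) + real (\<alpha> + (\<beta> - 1)) - 1) * Av (\<lambda>x. \<Sum>i\<in>UNIV. x$i * G i x)"
    unfolding G_def by (intro Av_div_hom_poly hom_poly_mult a hom_poly_pd b)
  also have "(\<lambda>x. \<Sum>i\<in>UNIV. x$i * G i x) = (\<lambda>x. real \<beta> * (a x * b x))"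
    using euler_hom_poly[OF b] by (simp add: G_def sum_distrib_left[symmetric] algebra_simps)
  finally show ?thesis
    using False by (simp add: Av_scale of_nat_diff algebra_simps)
qed

lemma Av_harmonic_orthogonal:
  fixes a b :: "real^'n \<Rightarrow> real"
  assumes n: "CARD('n) \<ge> 2" and a: "hom_poly \<alpha> a" and b: "hom_poly \<beta> b"
    and harm_a: "\<And>x. laplacian a x = 0" and harm_b: "\<And>x. laplacian b x = 0" and "\<alpha> \<noteq> \<beta>"
  shows "Av (\<lambda>x. a x * b x) = 0"
proof -
  have "real \<beta> * (real CARD('n) + real \<alpha> + real \<beta> - 2) * Av (\<lambda>x. a x * b x)
      = real \<alpha> * (real CARD('n) + real \<beta> + real \<alpha> - 2) * Av (\<lambda>x. b x * a x)"
    using Av_grad_inner_harmonic[OF a b harm_b] Av_grad_inner_harmonic[OF b a harm_a]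
    by (simp add: mult.commute)
  then have "(real \<beta> - real \<alpha>) * (real CARD('n) + real \<alpha> + real \<beta> - 2) * Av (\<lambda>x. a x * b x) = 0"
    by (simp add: mult.commute[of "b _"] algebra_simps)
  moreover have "real CARD('n) + real \<alpha> + real \<beta> - 2 > 0"
    using n \<open>\<alpha> \<noteq> \<beta>\<close> by linarith
  ultimately show ?thesis using \<open>\<alpha> \<noteq> \<beta>\<close> by simp
qed

lemma gradT_inner_on_sphere:
  fixes a b :: "real^'n \<Rightarrow> real"
  assumes a: "hom_poly \<alpha> a" and b: "hom_poly \<beta> b" and x: "norm x = 1"
  shows "gradT a x \<bullet> gradT b x = (\<Sum>i\<in>UNIV. pd i a x * pd i b x) - real \<alpha> * real \<beta> * a x * b x"
proof -
  have "x \<bullet> x = 1" using x by (simp add: dot_square_norm)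
  then have "gradT a x \<bullet> gradT b x = grad a x \<bullet> grad b x - (grad a x \<bullet> x) * (grad b x \<bullet> x)"
    unfolding gradT_def by (simp add: inner_diff_left inner_diff_right inner_commute algebra_simps)
  also have "\<dots> = grad a x \<bullet> grad b x - (real \<alpha> * a x) * (real \<beta> * b x)"
    by (simp only: grad_inner_point[OF a] grad_inner_point[OF b])
  finally show ?thesis
    by (simp add: grad_def inner_vec_def)
qed

lemma continuous_on_gradT: "hom_poly k f \<Longrightarrow> continuous_on UNIV (gradT f)"
  unfolding gradT_def grad_def
  by (intro continuous_intros continuous_on_vec_lambda continuous_on_pd)

lemma Av_gradT_inner_harmonic:
  fixes a b :: "real^'n \<Rightarrow> real"
  assumes a: "hom_poly m a" and b: "hom_poly m b" and harm: "\<And>x. laplacian b x = 0"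
  shows "Av (\<lambda>x. gradT a x \<bullet> gradT b x) = real m * (real m + real CARD('n) - 2) * Av (\<lambda>x. a x * b x)"
proof -
  have "Av (\<lambda>x. gradT a x \<bullet> gradT b x)
      = Av (\<lambda>x. (\<Sum>i\<in>UNIV. pd i a x * pd i b x) - (real m * real m) * (a x * b x))"
    by (rule Av_cong_sphere) (simp add: gradT_inner_on_sphere[OF a b] algebra_simps)
  also have "\<dots> = Av (\<lambda>x. \<Sum>i\<in>UNIV. pd i a x * pd i b x) - (real m * real m) * Av (\<lambda>x. a x * b x)"
    using continuous_on_pd[OF a] continuous_on_pd[OF b] continuous_on_hom_poly[OF a] continuous_on_hom_poly[OF b]
    by (simp add: Av_diff Av_scale continuous_intros)
  finally show ?thesis
    by (simp add: Av_grad_inner_harmonic[OF a b harm] algebra_simps)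
qed

section \<open>Vector fields with polynomial components\<close>

lemma inner_point_eq_sum_comp: "w x \<bullet> x = (\<Sum>j\<in>UNIV. x$j * comp w j x)"
  by (simp add: inner_vec_def comp_def mult.commute)

lemma inner_eq_sum_comp: "w x \<bullet> v x = (\<Sum>j\<in>UNIV. comp w j x * comp v j x)"
  by (simp add: inner_vec_def comp_def)

lemma continuous_on_field:
  assumes "\<And>j. hom_poly k (comp w j)"
  shows "continuous_on UNIV w"
proof -
  have "continuous_on UNIV (\<lambda>x. w x $ j)" for j
    using continuous_on_hom_poly[OF assms[of j]] by (simp add: comp_def)
  then show ?thesis
    using continuous_on_vec_lambda[of UNIV "\<lambda>j x. w x $ j"] by simp
qed

lemma hom_poly_divE: "(\<And>j. hom_poly k (comp w j)) \<Longrightarrow> hom_poly (k - 1) (divE w)"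
  unfolding divE_def[abs_def] by (intro hom_poly_sum hom_poly_pd) auto

lemma hom_poly_inner_point: "(\<And>j. hom_poly k (comp w j)) \<Longrightarrow> hom_poly (1 + k) (\<lambda>x. w x \<bullet> x)"
  unfolding inner_point_eq_sum_comp by (intro hom_poly_sum hom_poly_mult hom_poly_coord) auto

lemma divS_eq_divE:
  assumes "\<And>j. hom_poly k (comp w j)"
  shows "divS w x = divE w x - real k * (w x \<bullet> x)"
proof -
  have "divS w x = (\<Sum>j\<in>UNIV. pd j (comp w j) x - real k * comp w j x * x$j)"
    unfolding divS_def gradT_def using grad_inner_point[OF assms] by (simp add: grad_def)
  then show ?thesis
    by (simp add: divE_def sum_subtractf inner_point_eq_sum_comp sum_distrib_left algebra_simps)
qed

lemma continuous_on_divS: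
  assumes "\<And>j. hom_poly k (comp w j)"
  shows "continuous_on UNIV (divS w)"
  using divS_eq_divE[OF assms] continuous_on_hom_poly[OF hom_poly_divE[OF assms]]
    continuous_on_hom_poly[OF hom_poly_inner_point[OF assms]]
  by (simp add: continuous_intros)

lemma continuous_on_gradT_sq: "(\<And>j. hom_poly k (comp w j)) \<Longrightarrow> continuous_on UNIV (gradT_sq w)"
  unfolding gradT_sq_def[abs_def] by (intro continuous_intros continuous_on_gradT)

lemma Aop_inner_point_on_sphere:
  assumes "norm x = 1"
  shows "Aop w x \<bullet> x = divS w x"
proof -
  have "x \<bullet> x = 1" using assms by (simp add: dot_square_norm)
  moreover have "gradT f x \<bullet> x = 0" for f
    using \<open>x \<bullet> x = 1\<close> unfolding gradT_def by (simp add: inner_diff_left)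
  ultimately show ?thesis
    unfolding Aop_def by (simp add: inner_diff_left inner_sum_left)
qed

lemma inner_Aop:
  assumes h: "\<And>j. hom_poly k (comp w j)"
  shows "w x \<bullet> Aop w x
    = divE w x * (w x \<bullet> x) - (\<Sum>i\<in>UNIV. \<Sum>j\<in>UNIV. x$j * comp w i x * pd i (comp w j) x)"
proof -
  have gradT: "w x \<bullet> gradT (comp w j) x
      = (\<Sum>i\<in>UNIV. comp w i x * pd i (comp w j) x) - real k * comp w j x * (w x \<bullet> x)" for j
  proof -
    have "w x \<bullet> gradT (comp w j) x = w x \<bullet> grad (comp w j) x - (grad (comp w j) x \<bullet> x) * (w x \<bullet> x)"
      unfolding gradT_def by (simp add: inner_diff_right)
    then show ?thesis
      by (simp only: grad_inner_point[OF h]) (simp add: inner_vec_def grad_def comp_def)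
  qed
  have "w x \<bullet> Aop w x = divS w x * (w x \<bullet> x) - (\<Sum>j\<in>UNIV. x$j * (w x \<bullet> gradT (comp w j) x))"
    unfolding Aop_def by (simp add: inner_diff_right inner_sum_right)
  also have "\<dots> = divS w x * (w x \<bullet> x) - (\<Sum>j\<in>UNIV. \<Sum>i\<in>UNIV. x$j * comp w i x * pd i (comp w j) x)
       + real k * (w x \<bullet> x) * (\<Sum>j\<in>UNIV. x$j * comp w j x)"
    by (simp add: gradT right_diff_distrib sum_subtractf sum_distrib_left algebra_simps)
  also have "\<dots> = divE w x * (w x \<bullet> x) - (\<Sum>j\<in>UNIV. \<Sum>i\<in>UNIV. x$j * comp w i x * pd i (comp w j) x)"
    by (simp add: divS_eq_divE[OF h] inner_point_eq_sum_comp[symmetric] algebra_simps)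
  also have "(\<Sum>j\<in>UNIV. \<Sum>i\<in>UNIV. x$j * comp w i x * pd i (comp w j) x)
      = (\<Sum>i\<in>UNIV. \<Sum>j\<in>UNIV. x$j * comp w i x * pd i (comp w j) x)"
    by (rule sum.swap)
  finally show ?thesis .
qed

lemma pd_inner_point:
  assumes h: "\<And>j. hom_poly k (comp w j)"
  shows "pd i (\<lambda>x. w x \<bullet> x) x = comp w i x + (\<Sum>j\<in>UNIV. x$j * pd i (comp w j) x)"
proof -
  have "pd i (\<lambda>x. w x \<bullet> x) x = (\<Sum>j\<in>UNIV. pd i (\<lambda>x. x$j * comp w j x) x)"
    unfolding inner_point_eq_sum_comp by (intro pd_sum[where a = "1 + k"] hom_poly_mult hom_poly_coord h) auto
  also have "\<dots> = (\<Sum>j\<in>UNIV. (if i = j then comp w j x else 0) + x$j * pd i (comp w j) x)"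
    by (intro sum.cong) (simp_all add: pd_mult[OF hom_poly_coord h] pd_coord)
  finally show ?thesis by (simp add: sum.distrib)
qed

lemma Av_inner_Aop:
  fixes w :: "real^'n \<Rightarrow> real^'n"
  assumes h: "\<And>j. hom_poly k (comp w j)"
  shows "Av (\<lambda>x. w x \<bullet> Aop w x) = Av (\<lambda>x. w x \<bullet> w x) + 2 * Av (\<lambda>x. divE w x * (w x \<bullet> x))
     - (real CARD('n) + 2 * real k) * Av (\<lambda>x. (w x \<bullet> x)\<^sup>2)"
proof -
  define f where "f x = w x \<bullet> x" for x
  define S where "S = (\<lambda>x. \<Sum>i\<in>UNIV. \<Sum>j\<in>UNIV. x$j * comp w i x * pd i (comp w j) x)"
  have hf: "hom_poly (1 + k) f" unfolding f_def by (rule hom_poly_inner_point[OF h])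
  have cont: "continuous_on UNIV (\<lambda>x. divE w x * f x)" "continuous_on UNIV (\<lambda>x. w x \<bullet> w x)"
      "continuous_on UNIV S"
    unfolding S_def
    by (intro continuous_intros continuous_on_hom_poly[OF hf] continuous_on_hom_poly[OF hom_poly_divE[OF h]]
        continuous_on_field[OF h] continuous_on_hom_poly[OF h] continuous_on_pd[OF h])+
  have "pd i (\<lambda>x. comp w i x * f x) x
      = pd i (comp w i) x * f x + comp w i x * comp w i x
        + (\<Sum>j\<in>UNIV. x$j * comp w i x * pd i (comp w j) x)" for i x
    using pd_mult[OF h hf] pd_inner_point[OF h]
    by (simp add: f_def[symmetric] sum_distrib_left algebra_simps)
  then have "(\<Sum>i\<in>UNIV. pd i (\<lambda>x. comp w i x * f x) x) = divE w x * f x + w x \<bullet> w x + S x" for x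
    by (simp add: divE_def inner_eq_sum_comp S_def sum.distrib sum_distrib_right)
  then have "Av (\<lambda>x. divE w x * f x + w x \<bullet> w x + S x)
      = (real CARD('n) + 2 * real k) * Av (\<lambda>x. \<Sum>i\<in>UNIV. x$i * (comp w i x * f x))"
    using Av_div_hom_poly[of "k + (1 + k)" "\<lambda>i x. comp w i x * f x"] hom_poly_mult[OF h hf] by simp
  also have "(\<lambda>x. \<Sum>i\<in>UNIV. x$i * (comp w i x * f x)) = (\<lambda>x. (f x)\<^sup>2)"
    by (simp add: f_def inner_point_eq_sum_comp sum_distrib_right power2_eq_square mult.assoc)
  finally have "Av (\<lambda>x. divE w x * f x) + Av (\<lambda>x. w x \<bullet> w x) + Av S
      = (real CARD('n) + 2 * real k) * Av (\<lambda>x. (f x)\<^sup>2)"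
    using cont by (simp add: Av_add continuous_intros)
  moreover have "Av (\<lambda>x. w x \<bullet> Aop w x) = Av (\<lambda>x. divE w x * f x) - Av S"
    using cont by (simp add: inner_Aop[OF h] f_def S_def Av_diff)
  ultimately show ?thesis by (simp add: f_def algebra_simps)
qed

lemma comp_diff: "comp (\<lambda>x. w x - v x) j = (\<lambda>x. comp w j x - comp v j x)"
  by (simp add: comp_def fun_eq_iff)

lemma harmonic_divE:
  assumes h: "\<And>j. hom_poly k (comp w j)" and harm: "\<And>j x. laplacian (comp w j) x = 0"
  shows "laplacian (divE w) x = 0"
proof -
  have "laplacian (divE w) x = (\<Sum>j\<in>UNIV. laplacian (pd j (comp w j)) x)"
    unfolding divE_def[abs_def] by (rule laplacian_sum) (auto intro: hom_poly_pd h)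
  also have "\<dots> = (\<Sum>j\<in>UNIV. pd j (laplacian (comp w j)) x)"
    by (simp add: pd_laplacian_commute[OF h])
  also have "\<dots> = 0"
  proof -
    have "laplacian (comp w j) = (\<lambda>x. 0)" for j using harm by blast
    then show ?thesis by (simp add: pd_const)
  qed
  finally show ?thesis .
qed

lemma divE_scaled_harmonic:
  assumes h: "\<And>j. hom_poly k (comp w j)" and harm: "\<And>j x. laplacian (comp w j) x = 0"
  shows "hom_poly (k - 1) (\<lambda>x. divE w x / c)" and "laplacian (\<lambda>x. divE w x / c) x = 0"
proof -
  have eq: "(\<lambda>x. divE w x / c) = (\<lambda>x. inverse c * divE w x)" by (simp add: divide_inverse mult.commute)
  show "hom_poly (k - 1) (\<lambda>x. divE w x / c)"
    unfolding eq by (intro hom_poly_scale hom_poly_divE h)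
  show "laplacian (\<lambda>x. divE w x / c) x = 0"
    unfolding eq laplacian_scale[OF hom_poly_divE[OF h]] harmonic_divE[OF h harm] by simp
qed

lemma Av_harmonic_field_eq_0:
  fixes w :: "real^'n \<Rightarrow> real^'n"
  assumes "CARD('n) \<ge> 2" "k \<ge> 1" "\<And>j. hom_poly k (comp w j)" "\<And>j x. laplacian (comp w j) x = 0"
  shows "Av w = 0"
proof -
  have "Av w $ j = 0" for j
    using Av_component[OF continuous_on_field[OF assms(3)], of j] Av_harmonic_eq_0[OF assms(1,3,2,4)]
    by (simp add: comp_def)
  then show ?thesis by (simp add: vec_eq_iff)
qed

lemma Av_gradT_inner_harmonic_fields:
  fixes w v :: "real^'n \<Rightarrow> real^'n"
  assumes w: "\<And>j. hom_poly k (comp w j)" and v: "\<And>j. hom_poly k (comp v j)"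
    and harm: "\<And>j x. laplacian (comp v j) x = 0"
  shows "Av (\<lambda>x. \<Sum>j\<in>UNIV. gradT (comp w j) x \<bullet> gradT (comp v j) x)
    = real k * (real k + real CARD('n) - 2) * Av (\<lambda>x. w x \<bullet> v x)"
proof -
  have "Av (\<lambda>x. \<Sum>j\<in>UNIV. gradT (comp w j) x \<bullet> gradT (comp v j) x)
      = (\<Sum>j\<in>UNIV. Av (\<lambda>x. gradT (comp w j) x \<bullet> gradT (comp v j) x))"
    by (intro Av_sum continuous_intros continuous_on_gradT[OF w] continuous_on_gradT[OF v]) auto
  also have "\<dots> = real k * (real k + real CARD('n) - 2) * (\<Sum>j\<in>UNIV. Av (\<lambda>x. comp w j x * comp v j x))"
    by (simp add: Av_gradT_inner_harmonic[OF w v harm] sum_distrib_left)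
  also have "(\<Sum>j\<in>UNIV. Av (\<lambda>x. comp w j x * comp v j x)) = Av (\<lambda>x. w x \<bullet> v x)"
    unfolding inner_eq_sum_comp
    by (intro Av_sum[symmetric] continuous_intros continuous_on_hom_poly[OF w] continuous_on_hom_poly[OF v]) auto
  finally show ?thesis .
qed

lemma Av_gradT_sq:
  fixes w :: "real^'n \<Rightarrow> real^'n"
  assumes "\<And>j. hom_poly k (comp w j)" and "\<And>j x. laplacian (comp w j) x = 0"
  shows "Av (gradT_sq w) = real k * (real k + real CARD('n) - 2) * Av (\<lambda>x. w x \<bullet> w x)"
  using Av_gradT_inner_harmonic_fields[OF assms(1,1,2)]
  by (simp add: gradT_sq_def[abs_def] power2_norm_eq_inner)

lemma W12_inner_harmonic_fields:
  fixes w v :: "real^'n \<Rightarrow> real^'n"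
  assumes w: "\<And>j. hom_poly k (comp w j)" and v: "\<And>j. hom_poly k (comp v j)"
    and harm: "\<And>j x. laplacian (comp v j) x = 0"
  shows "W12_inner w v = (1 + real k * (real k + real CARD('n) - 2)) * Av (\<lambda>x. w x \<bullet> v x)"
  unfolding W12_inner_def
  using Av_gradT_inner_harmonic_fields[OF w v harm] continuous_on_field[OF w] continuous_on_field[OF v]
    continuous_on_gradT[OF w] continuous_on_gradT[OF v]
  by (simp add: Av_add continuous_intros algebra_simps)

lemma laplacian_inner_point:
  assumes h: "\<And>j. hom_poly k (comp w j)" and harm: "\<And>j x. laplacian (comp w j) x = 0"
  shows "laplacian (\<lambda>x. w x \<bullet> x) x = 2 * divE w x"
proof -
  have "laplacian (\<lambda>x. w x \<bullet> x) x = (\<Sum>j\<in>UNIV. laplacian (\<lambda>x. x$j * comp w j x) x)"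
    unfolding inner_point_eq_sum_comp by (intro laplacian_sum[where a = "1 + k"] hom_poly_mult hom_poly_coord h) auto
  also have "\<dots> = (\<Sum>j\<in>UNIV. 2 * pd j (comp w j) x)"
  proof (rule sum.cong[OF refl])
    fix j
    have "(\<Sum>i\<in>UNIV. pd i (\<lambda>x. x$j) x * pd i (comp w j) x) = pd j (comp w j) x"
      by (simp add: pd_coord if_distrib[of "\<lambda>c. c * _"] cong: if_cong)
    then show "laplacian (\<lambda>x. x$j * comp w j x) x = 2 * pd j (comp w j) x"
      by (simp add: laplacian_mult[OF hom_poly_coord h] laplacian_coord harm)
  qed
  finally show ?thesis by (simp add: divE_def sum_distrib_left)
qed

section \<open>The gradient field of a harmonic polynomial\<close>

text \<open>For a harmonic \<open>q\<close> of degree \<open>k - 1\<close> the coefficient \<open>n + 2k - 4\<close> is the one making the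
  components of \<open>grad_field k q\<close> harmonic; its divergence is then \<open>grad_field_div n k \<cdot> q\<close>.\<close>

definition grad_field_coeff :: "real \<Rightarrow> nat \<Rightarrow> real" where
  "grad_field_coeff n k = n + 2 * real k - 4"

definition grad_field_div :: "real \<Rightarrow> nat \<Rightarrow> real" where
  "grad_field_div n k = 2 * (real k - 1) - grad_field_coeff n k * (n + real k - 1)"

definition grad_field :: "nat \<Rightarrow> (real^'n \<Rightarrow> real) \<Rightarrow> real^'n \<Rightarrow> real^'n" where
  "grad_field k q x = (\<chi> j. (x \<bullet> x) * pd j q x - grad_field_coeff (real CARD('n)) k * (q x * x$j))"

lemma comp_grad_field:
  "comp (grad_field k q) j = (\<lambda>x. (x \<bullet> x) * pd j q x - grad_field_coeff (real CARD('n)) k * (q x * x$j))"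
  for q :: "real^'n \<Rightarrow> real"
  by (simp add: comp_def grad_field_def fun_eq_iff)

lemma grad_field_div_neg:
  assumes n: "3 \<le> n" and k: "1 \<le> k"
  shows "grad_field_div n k < 0"
proof -
  have "(2 * real k - 1) * (real k + 2) \<le> grad_field_coeff n k * (n + real k - 1)"
    using n k by (intro mult_mono) (auto simp: grad_field_coeff_def)
  moreover have "2 * (real k - 1) < (2 * real k - 1) * (real k + 2)"
    using k by (simp add: algebra_simps add_pos_pos)
  ultimately show ?thesis by (simp add: grad_field_div_def)
qed

lemma euler_pd_hom_poly:
  assumes q: "hom_poly (k - 1) q" and k: "k \<ge> 1"
  shows "(\<Sum>i\<in>UNIV. x$i * pd i (pd j q) x) = (real k - 2) * pd j q x"
proof (cases "k = 1")
  case True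
  then have "pd j q = (\<lambda>x. 0)" using hom_poly_0_pd[of q] q by auto
  then show ?thesis by (simp add: pd_const)
next
  case False
  then show ?thesis using euler_hom_poly[OF hom_poly_pd[OF q], of x j] k by (simp add: of_nat_diff)
qed

lemma hom_poly_grad_field:
  assumes q: "hom_poly (k - 1) q" and k: "k \<ge> 1"
  shows "hom_poly k (comp (grad_field k q) j)"
proof -
  have "hom_poly k (\<lambda>x. (x \<bullet> x) * pd j q x)"
  proof (cases "k = 1")
    case True
    then show ?thesis using hom_poly_0_pd[of q] q by simp
  next
    case False
    have "hom_poly (2 + (k - 1 - 1)) (\<lambda>x. (x \<bullet> x) * pd j q x)"
      by (rule hom_poly_mult[OF hom_poly_inner_self hom_poly_pd[OF q]])
    moreover have "2 + (k - 1 - 1) = k" using False k by simp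
    ultimately show ?thesis by simp
  qed
  moreover have "hom_poly k (\<lambda>x. q x * x$j)"
    using hom_poly_mult[OF q hom_poly_coord] k by simp
  ultimately show ?thesis
    unfolding comp_grad_field by (intro hom_poly_diff hom_poly_scale)
qed

lemma harmonic_grad_field:
  fixes q :: "real^'n \<Rightarrow> real"
  assumes q: "hom_poly (k - 1) q" and harm: "\<And>x. laplacian q x = 0" and k: "k \<ge> 1"
  shows "laplacian (comp (grad_field k q) j) x = 0"
proof -
  have "laplacian q = (\<lambda>x. 0)" using harm by blast
  then have harm_pd: "laplacian (pd j q) x = 0" for x
    using pd_laplacian_commute[OF q, of j x] by (simp add: pd_const)
  have "(\<Sum>i\<in>UNIV. pd i (\<lambda>x. x \<bullet> x) x * pd i (pd j q) x) = 2 * (\<Sum>i\<in>UNIV. x$i * pd i (pd j q) x)"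
    by (simp add: pd_inner_self sum_distrib_left mult.assoc)
  also have "\<dots> = 2 * ((real k - 2) * pd j q x)"
    by (simp only: euler_pd_hom_poly[OF q k])
  finally have A: "laplacian (\<lambda>x. (x \<bullet> x) * pd j q x) x = (2 * real CARD('n) + 4 * (real k - 2)) * pd j q x"
    by (simp add: laplacian_mult[OF hom_poly_inner_self hom_poly_pd[OF q]] laplacian_inner_self
        harm_pd algebra_simps)
  have "(\<Sum>i\<in>UNIV. pd i q x * pd i (\<lambda>x. x$j) x) = pd j q x"
    by (simp add: pd_coord if_distrib[of "\<lambda>c. _ * c"] cong: if_cong)
  then have B: "laplacian (\<lambda>x. q x * x$j) x = 2 * pd j q x"
    by (simp add: laplacian_mult[OF q hom_poly_coord] harm laplacian_coord)
  have "laplacian (comp (grad_field k q) j) x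
      = laplacian (\<lambda>x. (x \<bullet> x) * pd j q x) x - grad_field_coeff (real CARD('n)) k * laplacian (\<lambda>x. q x * x$j) x"
    unfolding comp_grad_field
    by (simp add: laplacian_diff[OF hom_poly_mult[OF hom_poly_inner_self hom_poly_pd[OF q]]
          hom_poly_scale[OF hom_poly_mult[OF q hom_poly_coord]]] laplacian_scale[OF hom_poly_mult[OF q hom_poly_coord]])
  then show ?thesis
    by (simp add: A B grad_field_coeff_def algebra_simps)
qed

lemma divE_grad_field:
  fixes q :: "real^'n \<Rightarrow> real"
  assumes q: "hom_poly (k - 1) q" and harm: "\<And>x. laplacian q x = 0" and k: "k \<ge> 1"
  shows "divE (grad_field k q) x = grad_field_div (real CARD('n)) k * q x"
proof -
  define c where "c = grad_field_coeff (real CARD('n)) k"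
  have pd_comp: "pd j (comp (grad_field k q) j) x
      = 2 * (x$j * pd j q x) + (x \<bullet> x) * pd j (pd j q) x - c * (pd j q x * x$j + q x)" for j
    unfolding comp_grad_field c_def[symmetric]
    by (simp add: pd_diff[OF hom_poly_mult[OF hom_poly_inner_self hom_poly_pd[OF q]]
          hom_poly_scale[OF hom_poly_mult[OF q hom_poly_coord]]] pd_scale[OF hom_poly_mult[OF q hom_poly_coord]]
        pd_mult[OF hom_poly_inner_self hom_poly_pd[OF q]] pd_mult[OF q hom_poly_coord] pd_inner_self pd_coord)
  have "divE (grad_field k q) x
      = (\<Sum>j\<in>UNIV. 2 * (x$j * pd j q x) + (x \<bullet> x) * pd j (pd j q) x - c * (pd j q x * x$j + q x))"
    unfolding divE_def using pd_comp by simp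
  also have "\<dots> = 2 * (\<Sum>j\<in>UNIV. x$j * pd j q x) + (x \<bullet> x) * laplacian q x
        - c * ((\<Sum>j\<in>UNIV. x$j * pd j q x) + real CARD('n) * q x)"
    by (simp add: laplacian_def sum.distrib sum_subtractf sum_distrib_left algebra_simps)
  finally have "divE (grad_field k q) x
      = 2 * (\<Sum>j\<in>UNIV. x$j * pd j q x) + (x \<bullet> x) * laplacian q x
        - c * ((\<Sum>j\<in>UNIV. x$j * pd j q x) + real CARD('n) * q x)" .
  then show ?thesis
    using k by (simp add: harm euler_hom_poly[OF q] grad_field_div_def c_def of_nat_diff algebra_simps)
qed

lemma grad_field_inner_point:
  fixes q :: "real^'n \<Rightarrow> real"
  assumes q: "hom_poly (k - 1) q" and k: "k \<ge> 1"
  shows "grad_field k q x \<bullet> x = (x \<bullet> x) * ((real k - 1 - grad_field_coeff (real CARD('n)) k) * q x)"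
proof -
  have "grad_field k q x \<bullet> x
      = (x \<bullet> x) * (\<Sum>j\<in>UNIV. x$j * pd j q x) - grad_field_coeff (real CARD('n)) k * q x * (\<Sum>j\<in>UNIV. x$j * x$j)"
    unfolding inner_point_eq_sum_comp[of "grad_field k q"] comp_grad_field
    by (simp add: sum_subtractf sum_distrib_left algebra_simps)
  also have "(\<Sum>j\<in>UNIV. x$j * x$j) = x \<bullet> x" by (simp add: inner_vec_def)
  finally show ?thesis
    using euler_hom_poly[OF q, of x] k by (simp add: of_nat_diff algebra_simps)
qed

lemma grad_field_inner_self_on_sphere:
  fixes q :: "real^'n \<Rightarrow> real"
  assumes q: "hom_poly (k - 1) q" and k: "k \<ge> 1" and x: "norm x = 1"
  defines "c \<equiv> grad_field_coeff (real CARD('n)) k"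
  shows "grad_field k q x \<bullet> grad_field k q x
    = (\<Sum>j\<in>UNIV. pd j q x * pd j q x) - 2 * c * (real k - 1) * (q x * q x) + c\<^sup>2 * (q x * q x)"
proof -
  have "x \<bullet> x = 1" using x by (simp add: dot_square_norm)
  then have xx: "(\<Sum>j\<in>UNIV. x$j * x$j) = 1" by (simp add: inner_vec_def)
  have "grad_field k q x \<bullet> grad_field k q x
      = (\<Sum>j\<in>UNIV. pd j q x * pd j q x) - 2 * c * q x * (\<Sum>j\<in>UNIV. x$j * pd j q x)
        + c\<^sup>2 * (q x * q x) * (\<Sum>j\<in>UNIV. x$j * x$j)"
    unfolding inner_eq_sum_comp[of "grad_field k q"] comp_grad_field c_def[symmetric] \<open>x \<bullet> x = 1\<close>
    by (simp add: power2_eq_square sum.distrib sum_subtractf sum_distrib_left algebra_simps)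
  then show ?thesis
    using euler_hom_poly[OF q, of x] k xx by (simp add: of_nat_diff algebra_simps)
qed

lemma Av_harmonic_mult_inner_point:
  fixes q :: "real^'n \<Rightarrow> real" and s :: "real^'n \<Rightarrow> real^'n"
  assumes n: "CARD('n) \<ge> 2" and k: "k \<ge> 1"
    and q: "hom_poly (k - 1) q" and harm_q: "\<And>x. laplacian q x = 0"
    and s: "\<And>j. hom_poly k (comp s j)" and harm_s: "\<And>j x. laplacian (comp s j) x = 0"
    and sol: "\<And>x. divE s x = 0"
  shows "Av (\<lambda>x. q x * (s x \<bullet> x)) = 0"
  using laplacian_inner_point[OF s harm_s] sol k
  by (intro Av_harmonic_orthogonal[OF n q hom_poly_inner_point[OF s] harm_q]) auto

lemma Av_grad_field_inner_solenoidal: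
  fixes q :: "real^'n \<Rightarrow> real" and s :: "real^'n \<Rightarrow> real^'n"
  assumes n: "CARD('n) \<ge> 2" and k: "k \<ge> 1"
    and q: "hom_poly (k - 1) q" and harm_q: "\<And>x. laplacian q x = 0"
    and s: "\<And>j. hom_poly k (comp s j)" and harm_s: "\<And>j x. laplacian (comp s j) x = 0"
    and sol: "\<And>x. divE s x = 0"
  shows "Av (\<lambda>x. grad_field k q x \<bullet> s x) = 0"
proof -
  note orth = Av_harmonic_mult_inner_point[OF assms]
  have "(\<Sum>j\<in>UNIV. pd j (\<lambda>x. q x * comp s j x) x) = (\<Sum>j\<in>UNIV. pd j q x * comp s j x)" for x
    using sol[of x] by (simp add: pd_mult[OF q s] sum.distrib divE_def sum_distrib_left[symmetric])
  then have "Av (\<lambda>x. \<Sum>j\<in>UNIV. pd j q x * comp s j x)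
      = (real CARD('n) + real (k - 1 + k) - 1) * Av (\<lambda>x. \<Sum>j\<in>UNIV. x$j * (q x * comp s j x))"
    using Av_div_hom_poly[of "k - 1 + k" "\<lambda>j x. q x * comp s j x"] hom_poly_mult[OF q s] by simp
  also have "(\<lambda>x. \<Sum>j\<in>UNIV. x$j * (q x * comp s j x)) = (\<lambda>x. q x * (s x \<bullet> x))"
    by (simp add: inner_point_eq_sum_comp sum_distrib_left algebra_simps)
  finally have grad_part: "Av (\<lambda>x. \<Sum>j\<in>UNIV. pd j q x * comp s j x) = 0"
    using orth by simp
  have "Av (\<lambda>x. grad_field k q x \<bullet> s x)
      = Av (\<lambda>x. (\<Sum>j\<in>UNIV. pd j q x * comp s j x) - grad_field_coeff (real CARD('n)) k * (q x * (s x \<bullet> x)))"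
  proof (rule Av_cong_sphere)
    fix x :: "real^'n" assume "norm x = 1"
    then have "x \<bullet> x = 1" by (simp add: dot_square_norm)
    then show "grad_field k q x \<bullet> s x
        = (\<Sum>j\<in>UNIV. pd j q x * comp s j x) - grad_field_coeff (real CARD('n)) k * (q x * (s x \<bullet> x))"
      unfolding inner_eq_sum_comp[of "grad_field k q"] inner_point_eq_sum_comp[of s] comp_grad_field
      by (simp add: sum_subtractf sum_distrib_left algebra_simps)
  qed
  also have "\<dots> = 0"
    using grad_part orth continuous_on_pd[OF q] continuous_on_hom_poly[OF q] continuous_on_hom_poly[OF s]
      continuous_on_hom_poly[OF hom_poly_inner_point[OF s]]
    by (simp add: Av_diff Av_scale continuous_intros)
  finally show ?thesis .
qed

section \<open>Averages over the three classes\<close>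

lemma Hnk_hom_poly: "Hnk k w \<Longrightarrow> hom_poly k (comp w j)"
  by (simp add: Hnk_def sph_harm_def)

lemma Hnk_harmonic: "Hnk k w \<Longrightarrow> laplacian (comp w j) x = 0"
  by (simp add: Hnk_def sph_harm_def)

lemma Hsol_divE_eq_0: "Hsol k w \<Longrightarrow> divE w x = 0"
  unfolding Hsol_def
  by (blast intro: hom_poly_eq_0_if_vanishes_on_ball hom_poly_divE Hnk_hom_poly)

lemma H1_averages:
  fixes w :: "real^'n \<Rightarrow> real^'n"
  assumes "H1 k w"
  shows "Av (\<lambda>x. w x \<bullet> Aop w x) = - real k * Av (\<lambda>x. w x \<bullet> w x)"
    and "(real CARD('n) + 2 * real k) * Av (\<lambda>x. (divS w x)\<^sup>2)
      = (real k)\<^sup>2 * (real k + 1) * Av (\<lambda>x. w x \<bullet> w x)"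
proof -
  have sol: "Hsol k w" and A: "\<And>x. norm x = 1 \<Longrightarrow> Aop w x = - real k *\<^sub>R w x"
    using assms by (auto simp: H1_def)
  have h: "hom_poly k (comp w j)" for j using sol by (simp add: Hsol_def Hnk_hom_poly)
  show wA: "Av (\<lambda>x. w x \<bullet> Aop w x) = - real k * Av (\<lambda>x. w x \<bullet> w x)"
    by (subst Av_scale[symmetric], rule Av_cong_sphere) (simp add: A)
  have "divS w x = - real k * (w x \<bullet> x)" for x
    by (simp add: divS_eq_divE[OF h] Hsol_divE_eq_0[OF sol])
  then have "Av (\<lambda>x. (divS w x)\<^sup>2) = (real k)\<^sup>2 * Av (\<lambda>x. (w x \<bullet> x)\<^sup>2)"
    by (simp add: power_mult_distrib Av_scale)
  moreover have "(real CARD('n) + 2 * real k) * Av (\<lambda>x. (w x \<bullet> x)\<^sup>2) = (real k + 1) * Av (\<lambda>x. w x \<bullet> w x)"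
    using Av_inner_Aop[OF h] wA by (simp add: Hsol_divE_eq_0[OF sol] algebra_simps)
  ultimately show "(real CARD('n) + 2 * real k) * Av (\<lambda>x. (divS w x)\<^sup>2)
      = (real k)\<^sup>2 * (real k + 1) * Av (\<lambda>x. w x \<bullet> w x)"
    by (simp add: algebra_simps)
qed

lemma H2_averages:
  fixes w :: "real^'n \<Rightarrow> real^'n"
  assumes "H2 k w"
  shows "Av (\<lambda>x. w x \<bullet> Aop w x) = Av (\<lambda>x. w x \<bullet> w x)"
    and "Av (\<lambda>x. (divS w x)\<^sup>2) = 0"
proof -
  have sol: "Hsol k w" and A: "\<And>x. norm x = 1 \<Longrightarrow> Aop w x = w x"
    using assms by (auto simp: H2_def)
  have h: "hom_poly k (comp w j)" for j using sol by (simp add: Hsol_def Hnk_hom_poly)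
  show "Av (\<lambda>x. w x \<bullet> Aop w x) = Av (\<lambda>x. w x \<bullet> w x)"
    by (rule Av_cong_sphere) (simp add: A)
  have divS: "divS w x = - real k * (w x \<bullet> x)" for x
    by (simp add: divS_eq_divE[OF h] Hsol_divE_eq_0[OF sol])
  have "divS w x = 0" if "norm x = 1" for x
  proof -
    have "w x \<bullet> x = divS w x"
      using Aop_inner_point_on_sphere[OF that, of w] by (simp add: A[OF that])
    then have "(real k + 1) * (w x \<bullet> x) = 0" by (simp add: divS algebra_simps)
    then show ?thesis by (simp add: divS)
  qed
  then show "Av (\<lambda>x. (divS w x)\<^sup>2) = 0"
    using Av_cong_sphere[of "\<lambda>x. (divS w x)\<^sup>2" "\<lambda>x. 0"] by simp
qed

lemma Hsol_sub_grad_field: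
  fixes w :: "real^'n \<Rightarrow> real^'n"
  assumes n: "CARD('n) \<ge> 3" and k: "k \<ge> 1" and w: "Hnk k w"
  defines "q \<equiv> \<lambda>x. divE w x / grad_field_div (real CARD('n)) k"
  shows "Hsol k (\<lambda>x. w x - grad_field k q x)"
proof -
  define \<beta> where "\<beta> = grad_field_div (real CARD('n)) k"
  have \<beta>: "\<beta> \<noteq> 0" using grad_field_div_neg[of "real CARD('n)" k] n k by (simp add: \<beta>_def)
  have h: "\<And>j. hom_poly k (comp w j)" and harm: "\<And>j x. laplacian (comp w j) x = 0"
    using w by (auto simp: Hnk_hom_poly Hnk_harmonic)
  have q_eq: "q = (\<lambda>x. (1 / \<beta>) * divE w x)" by (simp add: q_def \<beta>_def)
  have q: "hom_poly (k - 1) q" and harm_q: "laplacian q x = 0" for x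
    unfolding q_def by (rule divE_scaled_harmonic[OF h harm])+
  have g: "hom_poly k (comp (grad_field k q) j)" "laplacian (comp (grad_field k q) j) x = 0" for j x
    using hom_poly_grad_field[OF q k] harmonic_grad_field[OF q harm_q k] by auto
  have cont: "continuous_on UNIV w" "continuous_on UNIV (grad_field k q)"
    using continuous_on_field[OF h] continuous_on_field[OF g(1)] by auto
  have "divE (\<lambda>x. w x - grad_field k q x) x = divE w x - divE (grad_field k q) x" for x
    unfolding divE_def comp_diff by (simp add: pd_diff[OF h g(1)] sum_subtractf)
  then have sol: "divE (\<lambda>x. w x - grad_field k q x) x = 0" for x
    using \<beta> divE_grad_field[OF q harm_q k] by (simp add: q_def \<beta>_def[symmetric])
  have "Av (\<lambda>x. w x - grad_field k q x) = 0"
    using w Av_harmonic_field_eq_0[OF _ k g] n by (simp add: Av_diff cont Hnk_def Hn_def)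
  moreover have "Av (\<lambda>x. (w x - grad_field k q x) \<bullet> x) = 0"
  proof -
    have "Av (divE w) = (real CARD('n) + real k - 1) * Av (\<lambda>x. w x \<bullet> x)"
      using Av_div_hom_poly[of k "comp w", OF h] by (simp add: divE_def[abs_def] inner_point_eq_sum_comp)
    then have "Av q = 0"
      using w unfolding q_eq Av_scale by (simp add: Hnk_def Hn_def)
    moreover have "Av (\<lambda>x. grad_field k q x \<bullet> x)
        = Av (\<lambda>x. (real k - 1 - grad_field_coeff (real CARD('n)) k) * q x)"
      by (rule Av_cong_sphere) (simp add: grad_field_inner_point[OF q k] dot_square_norm)
    ultimately show ?thesis
      using w cont by (simp add: inner_diff_left Av_diff Av_scale continuous_intros Hnk_def Hn_def)
  qed
  ultimately show ?thesis
    using h g sol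
    by (auto simp: Hsol_def Hnk_def Hn_def sph_harm_def comp_diff laplacian_diff[OF h g(1)] harm
        intro: hom_poly_diff)
qed

text \<open>Subtracting the gradient field with the same divergence leaves a solenoidal field \<open>s\<close>. For
  harmonic fields of equal degree the \<open>W^{1,2}\<close> product is a multiple of the \<open>L\<^sup>2\<close> product, so the
  orthogonality of \<open>w\<close> to \<open>s\<close> forces \<open>s\<close> to vanish in mean square.\<close>

lemma H3_solenoidal_part_vanishes:
  fixes w :: "real^'n \<Rightarrow> real^'n"
  assumes n: "CARD('n) \<ge> 3" and k: "k \<ge> 1" and w: "H3 k w"
  defines "q \<equiv> \<lambda>x. divE w x / grad_field_div (real CARD('n)) k"
    and "s \<equiv> \<lambda>x. w x - grad_field k (\<lambda>y. divE w y / grad_field_div (real CARD('n)) k) x"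
  shows "Av (\<lambda>x. grad_field k q x \<bullet> s x) = 0" and "Av (\<lambda>x. s x \<bullet> s x) = 0"
    and "Av (\<lambda>x. (s x \<bullet> x)\<^sup>2) = 0" and "Av (\<lambda>x. q x * (s x \<bullet> x)) = 0"
proof -
  have wk: "Hnk k w" using w by (simp add: H3_def)
  have h: "\<And>j. hom_poly k (comp w j)" and harm: "\<And>j x. laplacian (comp w j) x = 0"
    using wk by (auto simp: Hnk_hom_poly Hnk_harmonic)
  have sol: "Hsol k s" unfolding s_def by (rule Hsol_sub_grad_field[OF n k wk])
  then have hs: "\<And>j. hom_poly k (comp s j)" and harm_s: "\<And>j x. laplacian (comp s j) x = 0"
    and div_s: "\<And>x. divE s x = 0"
    by (auto simp: Hsol_def Hnk_hom_poly Hnk_harmonic Hsol_divE_eq_0)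
  have q: "hom_poly (k - 1) q" "\<And>x. laplacian q x = 0"
    unfolding q_def by (rule divE_scaled_harmonic[OF h harm])+
  have cont: "continuous_on UNIV w" "continuous_on UNIV s" "continuous_on UNIV (grad_field k q)"
    using continuous_on_field h hs hom_poly_grad_field[OF q(1) k] by blast+
  have "(1 + real k * (real k + real CARD('n) - 2)) * Av (\<lambda>x. w x \<bullet> s x) = 0"
    using w sol W12_inner_harmonic_fields[OF h hs harm_s] by (simp add: H3_def)
  moreover have "0 \<le> real k * (real k + real CARD('n) - 2)" using n by (intro mult_nonneg_nonneg) auto
  ultimately have ws: "Av (\<lambda>x. w x \<bullet> s x) = 0" by simp
  show gs: "Av (\<lambda>x. grad_field k q x \<bullet> s x) = 0"
    using n by (intro Av_grad_field_inner_solenoidal[OF _ k q hs harm_s div_s]) auto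
  have "s x \<bullet> s x = w x \<bullet> s x - grad_field k q x \<bullet> s x" for x
    by (simp add: s_def q_def inner_diff_left)
  then show ss: "Av (\<lambda>x. s x \<bullet> s x) = 0"
    using ws gs cont by (simp add: Av_diff continuous_intros)
  then show "Av (\<lambda>x. (s x \<bullet> x)\<^sup>2) = 0"
    using Av_inner_point_sq_le[OF cont(2)] by simp
  show "Av (\<lambda>x. q x * (s x \<bullet> x)) = 0"
    using n by (intro Av_harmonic_mult_inner_point[OF _ k q hs harm_s div_s]) auto
qed

lemma H3_average_inner_self:
  fixes w :: "real^'n \<Rightarrow> real^'n"
  assumes n: "CARD('n) \<ge> 3" and k: "k \<ge> 1" and w: "H3 k w"
  shows "Av (\<lambda>x. w x \<bullet> w x) = (real CARD('n) + 2 * real k - 4) * (real CARD('n) + real k - 3)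
      * Av (\<lambda>x. (divE w x / grad_field_div (real CARD('n)) k)\<^sup>2)"
proof -
  define q where "q = (\<lambda>x. divE w x / grad_field_div (real CARD('n)) k)"
  define s where "s = (\<lambda>x. w x - grad_field k q x)"
  define c where "c = grad_field_coeff (real CARD('n)) k"
  have vanish: "Av (\<lambda>x. grad_field k q x \<bullet> s x) = 0" "Av (\<lambda>x. s x \<bullet> s x) = 0"
    using H3_solenoidal_part_vanishes[OF n k w] by (simp_all add: s_def q_def)
  have hw: "\<And>j. hom_poly k (comp w j)" and harm: "\<And>j x. laplacian (comp w j) x = 0"
    using w by (auto simp: H3_def Hnk_hom_poly Hnk_harmonic)
  have q: "hom_poly (k - 1) q" "\<And>x. laplacian q x = 0"
    unfolding q_def by (rule divE_scaled_harmonic[OF hw harm])+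
  have cont: "continuous_on UNIV q" "continuous_on UNIV (\<lambda>x. pd j q x)"
      "continuous_on UNIV (grad_field k q)" "continuous_on UNIV s" for j
    using continuous_on_hom_poly[OF q(1)] continuous_on_pd[OF q(1)]
      continuous_on_field[OF hom_poly_grad_field[OF q(1) k]] continuous_on_field[OF hw]
    by (auto simp: s_def intro!: continuous_intros)
  have "w x \<bullet> w x = grad_field k q x \<bullet> grad_field k q x + 2 * (grad_field k q x \<bullet> s x) + s x \<bullet> s x" for x
    by (simp add: s_def inner_diff_left inner_diff_right inner_commute)
  then have "Av (\<lambda>x. w x \<bullet> w x) = Av (\<lambda>x. grad_field k q x \<bullet> grad_field k q x)"
    using vanish cont by (simp add: Av_add Av_scale continuous_intros)
  also have "\<dots> = Av (\<lambda>x. (\<Sum>j\<in>UNIV. pd j q x * pd j q x) + (c\<^sup>2 - 2 * c * (real k - 1)) * (q x * q x))"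
    by (rule Av_cong_sphere) (simp add: grad_field_inner_self_on_sphere[OF q(1) k] c_def algebra_simps)
  also have "\<dots> = Av (\<lambda>x. \<Sum>j\<in>UNIV. pd j q x * pd j q x) + (c\<^sup>2 - 2 * c * (real k - 1)) * Av (\<lambda>x. q x * q x)"
    by (subst Av_add) (use cont in \<open>auto intro!: continuous_intros simp: Av_scale\<close>)
  also have "Av (\<lambda>x. \<Sum>j\<in>UNIV. pd j q x * pd j q x)
      = real (k - 1) * (real CARD('n) + real (k - 1) + real (k - 1) - 2) * Av (\<lambda>x. q x * q x)"
    by (rule Av_grad_inner_harmonic[OF q(1) q(1) q(2)])
  finally show ?thesis
    using k by (simp add: q_def c_def grad_field_coeff_def of_nat_diff power2_eq_square algebra_simps)
qed

lemma H3_averages_inner_point: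
  fixes w :: "real^'n \<Rightarrow> real^'n"
  assumes n: "CARD('n) \<ge> 3" and k: "k \<ge> 1" and w: "H3 k w"
  defines "\<beta> \<equiv> grad_field_div (real CARD('n)) k"
    and "\<mu> \<equiv> real CARD('n) + real k - 3"
    and "Q \<equiv> Av (\<lambda>x. (divE w x / grad_field_div (real CARD('n)) k)\<^sup>2)"
  shows "Av (\<lambda>x. (w x \<bullet> x)\<^sup>2) = \<mu>\<^sup>2 * Q"
    and "Av (\<lambda>x. divE w x * (w x \<bullet> x)) = - \<beta> * \<mu> * Q"
    and "Av (\<lambda>x. (divS w x)\<^sup>2) = (\<beta> + real k * \<mu>)\<^sup>2 * Q"
proof -
  define q where "q = (\<lambda>x. divE w x / \<beta>)"
  define h where "h = (\<lambda>x. (w x - grad_field k q x) \<bullet> x)"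
  have vanish: "Av (\<lambda>x. (h x)\<^sup>2) = 0" "Av (\<lambda>x. q x * h x) = 0"
    using H3_solenoidal_part_vanishes[OF n k w] by (simp_all add: h_def q_def \<beta>_def)
  have hw: "\<And>j. hom_poly k (comp w j)" and harm: "\<And>j x. laplacian (comp w j) x = 0"
    using w by (auto simp: H3_def Hnk_hom_poly Hnk_harmonic)
  have q: "hom_poly (k - 1) q" unfolding q_def by (rule divE_scaled_harmonic[OF hw harm])
  have \<beta>: "\<beta> \<noteq> 0" using grad_field_div_neg[of "real CARD('n)" k] n k by (simp add: \<beta>_def)
  have cont: "continuous_on UNIV q" "continuous_on UNIV h"
    using continuous_on_hom_poly[OF q] continuous_on_field[OF hom_poly_grad_field[OF q k]]
      continuous_on_field[OF hw]
    by (auto simp: h_def intro!: continuous_intros)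
  have divE_w: "divE w x = \<beta> * q x" for x using \<beta> by (simp add: q_def)
  have on_sphere: "w x \<bullet> x = - \<mu> * q x + h x" if "norm x = 1" for x
    using that grad_field_inner_point[OF q k, of x]
    by (simp add: h_def inner_diff_left dot_square_norm \<mu>_def grad_field_coeff_def algebra_simps)
  have Q: "Av (\<lambda>x. (q x)\<^sup>2) = Q" by (simp add: Q_def q_def \<beta>_def)
  have "Av (\<lambda>x. (w x \<bullet> x)\<^sup>2) = Av (\<lambda>x. \<mu>\<^sup>2 * (q x)\<^sup>2 - 2 * \<mu> * (q x * h x) + (h x)\<^sup>2)"
    by (rule Av_cong_sphere) (simp add: on_sphere power2_eq_square algebra_simps)
  then show "Av (\<lambda>x. (w x \<bullet> x)\<^sup>2) = \<mu>\<^sup>2 * Q"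
    using vanish cont Q by (simp add: Av_add Av_diff Av_scale continuous_intros)
  have "Av (\<lambda>x. divE w x * (w x \<bullet> x)) = Av (\<lambda>x. \<beta> * (q x * h x) - (\<beta> * \<mu>) * (q x)\<^sup>2)"
    by (rule Av_cong_sphere) (simp add: on_sphere divE_w power2_eq_square algebra_simps)
  then show "Av (\<lambda>x. divE w x * (w x \<bullet> x)) = - \<beta> * \<mu> * Q"
    using vanish cont Q by (simp add: Av_diff Av_scale continuous_intros)
  have "Av (\<lambda>x. (divS w x)\<^sup>2) = Av (\<lambda>x. (\<beta> + real k * \<mu>)\<^sup>2 * (q x)\<^sup>2
      - 2 * real k * (\<beta> + real k * \<mu>) * (q x * h x) + (real k)\<^sup>2 * (h x)\<^sup>2)"
    by (rule Av_cong_sphere) (simp add: divS_eq_divE[OF hw] on_sphere divE_w power2_eq_square algebra_simps)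
  then show "Av (\<lambda>x. (divS w x)\<^sup>2) = (\<beta> + real k * \<mu>)\<^sup>2 * Q"
    using vanish cont Q by (simp add: Av_add Av_diff Av_scale continuous_intros)
qed

lemma H3_averages:
  fixes w :: "real^'n \<Rightarrow> real^'n"
  assumes n: "CARD('n) \<ge> 3" and k: "k \<ge> 1" and w: "H3 k w"
  defines "\<sigma> \<equiv> real k + real CARD('n) - 2"
  shows "Av (\<lambda>x. w x \<bullet> Aop w x) = \<sigma> * Av (\<lambda>x. w x \<bullet> w x)"
    and "(2 * \<sigma> - real CARD('n)) * Av (\<lambda>x. (divS w x)\<^sup>2) = \<sigma>\<^sup>2 * (\<sigma> - 1) * Av (\<lambda>x. w x \<bullet> w x)"
proof -
  note avg = H3_average_inner_self[OF n k w] H3_averages_inner_point[OF n k w]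
  have h: "\<And>j. hom_poly k (comp w j)" using w by (simp add: H3_def Hnk_hom_poly)
  show "Av (\<lambda>x. w x \<bullet> Aop w x) = \<sigma> * Av (\<lambda>x. w x \<bullet> w x)"
    unfolding Av_inner_Aop[OF h] avg(1,2,3)
    by (simp add: \<sigma>_def grad_field_div_def grad_field_coeff_def power2_eq_square algebra_simps)
  show "(2 * \<sigma> - real CARD('n)) * Av (\<lambda>x. (divS w x)\<^sup>2) = \<sigma>\<^sup>2 * (\<sigma> - 1) * Av (\<lambda>x. w x \<bullet> w x)"
    unfolding avg(1,4)
    by (simp add: \<sigma>_def grad_field_div_def grad_field_coeff_def power2_eq_square algebra_simps)
qed

lemma Hki_Hnk: "i \<in> {1, 2, 3} \<Longrightarrow> Hki k i w \<Longrightarrow> Hnk k w"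
  by (auto simp: Hki_def H1_def H2_def H3_def Hsol_def)

lemma Hki_averages:
  fixes w :: "real^'n \<Rightarrow> real^'n"
  assumes n: "CARD('n) \<ge> 3" and k: "k \<ge> 1" and i: "i \<in> {1, 2, 3}" and w: "Hki k i w"
  defines "\<sigma> \<equiv> sig (real CARD('n)) k i"
  shows "Av (\<lambda>x. w x \<bullet> Aop w x) = \<sigma> * Av (\<lambda>x. w x \<bullet> w x)"
    and "(2 * \<sigma> - real CARD('n)) * Av (\<lambda>x. (divS w x)\<^sup>2) = \<sigma>\<^sup>2 * (\<sigma> - 1) * Av (\<lambda>x. w x \<bullet> w x)"
proof -
  consider "i = 1" "H1 k w" | "i = 2" "H2 k w" | "i = 3" "H3 k w"
    using i w by (auto simp: Hki_def)
  then have "Av (\<lambda>x. w x \<bullet> Aop w x) = \<sigma> * Av (\<lambda>x. w x \<bullet> w x) \<and>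
    (2 * \<sigma> - real CARD('n)) * Av (\<lambda>x. (divS w x)\<^sup>2) = \<sigma>\<^sup>2 * (\<sigma> - 1) * Av (\<lambda>x. w x \<bullet> w x)"
  proof cases
    case 1
    then show ?thesis
      using H1_averages[OF 1(2)] by (simp add: \<sigma>_def sig_def power2_eq_square algebra_simps)
  next
    case 2
    then show ?thesis
      using H2_averages[OF 2(2)] by (simp add: \<sigma>_def sig_def)
  next
    case 3
    then show ?thesis
      using H3_averages[OF n k 3(2)] by (simp add: \<sigma>_def sig_def)
  qed
  then show "Av (\<lambda>x. w x \<bullet> Aop w x) = \<sigma> * Av (\<lambda>x. w x \<bullet> w x)"
    and "(2 * \<sigma> - real CARD('n)) * Av (\<lambda>x. (divS w x)\<^sup>2) = \<sigma>\<^sup>2 * (\<sigma> - 1) * Av (\<lambda>x. w x \<bullet> w x)"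
    by auto
qed

lemma Qn_eq_averages:
  fixes w :: "real^'n \<Rightarrow> real^'n"
  assumes "\<And>j. hom_poly k (comp w j)"
  shows "Qn w = real CARD('n) / (2 * (real CARD('n) - 1)) *
      (Av (gradT_sq w) + (real CARD('n) - 3) / (real CARD('n) - 1) * Av (\<lambda>x. (divS w x)\<^sup>2)) - QV w"
proof -
  define c where "c = (real CARD('n) - 3) / (real CARD('n) - 1)"
  have "continuous_on UNIV (\<lambda>x. c * (divS w x)\<^sup>2)"
    using continuous_on_divS[OF assms] by (intro continuous_intros)
  then have "Av (\<lambda>x. gradT_sq w x + c * (divS w x)\<^sup>2) = Av (gradT_sq w) + c * Av (\<lambda>x. (divS w x)\<^sup>2)"
    by (simp only: Av_add[OF continuous_on_gradT_sq[OF assms]] Av_scale)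
  then show ?thesis by (simp add: Qn_def Let_def c_def)
qed

lemma coefficients_from_averages:
  fixes n A D G W :: real
  assumes n: "n \<ge> 3" and k: "k \<ge> 1" and i: "i \<in> {1, 2, 3}"
    and A: "A = sig n k i * W"
    and D: "(2 * sig n k i - n) * D = (sig n k i)\<^sup>2 * (sig n k i - 1) * W"
    and G: "G = lam n k * W"
  shows "n / 2 * A = cc n k i * G" and "D = alph n k i * G"
    and "n / (2 * (n - 1)) * (G + (n - 3) / (n - 1) * D) - n / 2 * A = CC n k i * G"
proof -
  define \<sigma> where "\<sigma> = sig n k i"
  have lam: "lam n k \<noteq> 0" using n k by (simp add: lam_def)
  have \<sigma>: "2 * \<sigma> - n \<noteq> 0" using n k i by (auto simp: \<sigma>_def sig_def)
  show QV: "n / 2 * A = cc n k i * G"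
    using lam by (simp add: A G cc_def \<sigma>_def[symmetric])
  have "alph n k i * lam n k = \<sigma>\<^sup>2 * (\<sigma> - 1) / (2 * \<sigma> - n)"
    using lam \<sigma> n by (simp add: alph_def cc_def \<sigma>_def[symmetric] field_simps)
  moreover have "D = \<sigma>\<^sup>2 * (\<sigma> - 1) / (2 * \<sigma> - n) * W"
    using D \<sigma> by (simp add: \<sigma>_def[symmetric] field_simps)
  ultimately show D': "D = alph n k i * G"
    by (simp add: G mult.assoc[symmetric])
  have alg: "x / (2 * y) * (u + z / y * (a * u)) - c * u = (x / (2 * y) + x * z / (2 * y\<^sup>2) * a - c) * u"
    if "y \<noteq> 0" for x y z u a c :: real
    using that by (simp add: field_simps power2_eq_square)
  show "n / (2 * (n - 1)) * (G + (n - 3) / (n - 1) * D) - n / 2 * A = CC n k i * G"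
    unfolding QV D' CC_def by (rule alg) (use n in simp)
qed

theorem lemma5p2:
  fixes w :: "real^'n \<Rightarrow> real^'n" and k i :: nat
  assumes "CARD('n) \<ge> 3" and "k \<ge> 1" and "i \<in> {1, 2, 3}" and "Hki k i w"
  shows "QV w = cc (real CARD('n)) k i * Av (gradT_sq w) \<and>
         Av (\<lambda>x. (divS w x)\<^sup>2) = alph (real CARD('n)) k i * Av (gradT_sq w) \<and>
         Qn w = CC (real CARD('n)) k i * Av (gradT_sq w)"
proof -
  have w: "Hnk k w" using Hki_Hnk assms(3,4) by blast
  have n: "real CARD('n) \<ge> 3" using assms(1) by simp
  have "Av (gradT_sq w) = lam (real CARD('n)) k * Av (\<lambda>x. w x \<bullet> w x)"
    using Av_gradT_sq[of k w] w by (simp add: Hnk_hom_poly Hnk_harmonic lam_def algebra_simps)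
  note coefficients = coefficients_from_averages[OF n assms(2,3) Hki_averages[OF assms] this]
  show ?thesis
    using coefficients Qn_eq_averages[of k w] w by (simp add: QV_def Hnk_hom_poly)
qed

end
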